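(* Let $\mathsf{C^\infty Var}:=(\mathsf{C^\infty Alg}_{\mathrm{fg}})^{\mathrm{op}}$ be the category of $\mathcal{C}^{\infty}$-varieties, let $W$ be a local Artinian $\mathbb{R}$-algebra (with its canonical $\mathcal{C}^\infty$-algebra structure) and $D=\mathrm{Spec}\,W$. Then the functor $(-)\times D:\mathsf{C^\infty Var}\to\mathsf{C^\infty Var}$ has a right adjoint $Y\mapsto Y^D$; that is, for every $\mathcal{C}^{\infty}$-variety $Y$ there is a $\mathcal{C}^{\infty}$-variety $Y^D$ with $\mathrm{Hom}_{\mathsf{C^\infty Var}}(X,Y^D)\cong\mathrm{Hom}_{\mathsf{C^\infty Var}}(X\times D,Y)$ naturally in $X\in\mathsf{C^\infty Var}$.
   Context: A $\mathcal{C}^{\infty}$-algebra is a finite-product-preserving functor $\mathsf{CartSp}\to\mathsf{Set}$, where $\mathsf{CartSp}$ has objects $\mathbb{R}^n$ ($n\ge0$) and smooth maps; it is finitely generated if isomorphic to $\mathcal{C}^{\infty}(\mathbb{R}^n)/I$ for an ideal $I$ of its underlying ring. $\mathrm{Spec}\,A$ denotes $A$ regarded as an object of the opposite category. The product $X\times D$ in $\mathsf{C^\infty Var}$ corresponds to the $\mathcal{C}^\infty$-tensor product (coproduct of $\mathcal{C}^\infty$-algebras) $\mathcal{O}(X)\widehat{\otimes}W$. A local Artinian $\mathbb{R}$-algebra is a finite-dimensional commutative $\mathbb{R}$-algebra $W$ with a maximal ideal $\mathfrak m_W$ such that $W/\mathfrak m_W\cong\mathbb{R}$ and $\mathfrak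 m_W^N=0$ for some $N$; such $W$ lifts uniquely to a (finitely presented) $\mathcal{C}^\infty$-algebra. *)

theory Defs
  imports "HOL-Analysis.Analysis"
begin

text \<open>Points of R^n are encoded as functions nat => real (only the first n coordinates
matter); a function on R^n is a function (nat => real) => real depending only on the
first n coordinates. The space nat => real carries the product topology.\<close>

type_synonym fn = "(nat \<Rightarrow> real) \<Rightarrow> real"

coinductive smooth :: "nat \<Rightarrow> fn \<Rightarrow> bool" for n :: nat where
  "(\<forall>x. f x = f (\<lambda>i. if i < n then x i else 0)) \<Longrightarrow>
   continuous_on UNIV f \<Longrightarrow>
   (\<forall>i<n. \<exists>f'. smooth n f' \<and>
      (\<forall>x. ((\<lambda>t. f (x(i := t))) has_real_derivative f' x) (at (x i)))) \<Longrightarrow>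
   smooth n f"

definition Cinf :: "nat \<Rightarrow> fn set" where
  "Cinf n = {f. smooth n f}"

definition is_ideal :: "nat \<Rightarrow> fn set \<Rightarrow> bool" where
  "is_ideal n I \<longleftrightarrow> I \<subseteq> Cinf n \<and> (\<lambda>x. 0) \<in> I \<and>
     (\<forall>f\<in>I. \<forall>g\<in>I. (\<lambda>x. f x + g x) \<in> I) \<and>
     (\<forall>a\<in>Cinf n. \<forall>f\<in>I. (\<lambda>x. a x * f x) \<in> I)"

definition ideal_gen :: "nat \<Rightarrow> fn set \<Rightarrow> fn set" where
  "ideal_gen n S = \<Inter>{I. is_ideal n I \<and> S \<subseteq> I}"

text \<open>Congruence modulo an ideal (equality in C-infinity(R^n)/I).\<close>
definition ceq :: "fn set \<Rightarrow> fn \<Rightarrow> fn \<Rightarrow> bool" where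
  "ceq I f g \<longleftrightarrow> (\<lambda>x. f x - g x) \<in> I"

definition cinf_op :: "nat \<Rightarrow> fn \<Rightarrow> (nat \<Rightarrow> fn) \<Rightarrow> fn" where
  "cinf_op k g fs = (\<lambda>x. g (\<lambda>j. if j < k then fs j x else 0))"

text \<open>A morphism of C-infinity-algebras C-infinity(R^n)/I -> C-infinity(R^m)/J, given on
representatives: well defined on classes and commuting with all C-infinity operations.\<close>
definition alg_hom :: "nat \<Rightarrow> fn set \<Rightarrow> nat \<Rightarrow> fn set \<Rightarrow> (fn \<Rightarrow> fn) \<Rightarrow> bool" where
  "alg_hom n I m J h \<longleftrightarrow>
     (\<forall>f\<in>Cinf n. h f \<in> Cinf m) \<and>
     (\<forall>f\<in>Cinf n. \<forall>g\<in>Cinf n. ceq I f g \<longrightarrow> ceq J (h f) (h g)) \<and>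
     (\<forall>k. \<forall>g\<in>Cinf k. \<forall>fs :: nat \<Rightarrow> fn. (\<forall>j<k. fs j \<in> Cinf n) \<longrightarrow>
        ceq J (h (cinf_op k g fs)) (cinf_op k g (\<lambda>j. h (fs j))))"

text \<open>Equality of two morphisms out of C-infinity(R^n)/_ into _/J.\<close>
definition hom_equiv :: "nat \<Rightarrow> fn set \<Rightarrow> (fn \<Rightarrow> fn) \<Rightarrow> (fn \<Rightarrow> fn) \<Rightarrow> bool" where
  "hom_equiv n J h1 h2 \<longleftrightarrow> (\<forall>f\<in>Cinf n. ceq J (h1 f) (h2 f))"

text \<open>C-infinity(R^k)/J is, as an R-algebra, local Artinian: finite dimensional, with a
maximal ideal M/J with residue field R and (M/J)^N = 0.\<close>
definition local_artinian :: "nat \<Rightarrow> fn set \<Rightarrow> bool" where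
  "local_artinian k J \<longleftrightarrow> is_ideal k J \<and>
     (\<exists>B. finite B \<and> B \<subseteq> Cinf k \<and>
        (\<forall>f\<in>Cinf k. \<exists>c :: fn \<Rightarrow> real. ceq J f (\<lambda>x. \<Sum>b\<in>B. c b * b x))) \<and>
     (\<exists>M N. is_ideal k M \<and> J \<subseteq> M \<and> M \<noteq> Cinf k \<and>
        (\<forall>f\<in>Cinf k. \<exists>c::real. ceq M f (\<lambda>x. c)) \<and>
        (\<forall>fs :: nat \<Rightarrow> fn. (\<forall>j<N. fs j \<in> M) \<longrightarrow> (\<lambda>x. \<Prod>j<N. fs j x) \<in> J))"

text \<open>Coproduct (C-infinity tensor product) of C-infinity(R^n)/I and C-infinity(R^k)/J:
C-infinity(R^(n+k))/(I,J), X-variables first, then the k variables of W.\<close>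
definition shift_fun :: "nat \<Rightarrow> fn \<Rightarrow> fn" where
  "shift_fun n g = (\<lambda>z. g (\<lambda>j. z (n + j)))"

definition tensor_ideal :: "nat \<Rightarrow> fn set \<Rightarrow> nat \<Rightarrow> fn set \<Rightarrow> fn set" where
  "tensor_ideal n I k J = ideal_gen (n + k)
     ({(\<lambda>z. f (\<lambda>i. if i < n then z i else 0)) | f. f \<in> I} \<union> {shift_fun n g | g. g \<in> J})"

text \<open>For u : C-infinity(R^n)/I -> C-infinity(R^n')/I', the map u (x) id_W on the
coproducts (i.e. the algebra map of u x id_D).\<close>
definition tensor_map :: "nat \<Rightarrow> nat \<Rightarrow> nat \<Rightarrow> (fn \<Rightarrow> fn) \<Rightarrow> fn \<Rightarrow> fn" where
  "tensor_map n n' k u F = (\<lambda>z. F (\<lambda>i. if i < n then u (\<lambda>x. x i) z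
       else if i < n + k then z (n' + (i - n)) else 0))"

end

theory Submission
  imports Defs
begin

text \<open>Choose an \<open>\<real>\<close>-basis \<open>e\<^sub>1, \<dots>, e\<^sub>d\<close> of \<open>W = C\<^sup>\<infinity>(\<real>\<^sup>k)/J\<close>. For a finitely generated
  \<open>C\<^sup>\<infinity>\<close>-algebra \<open>A = C\<^sup>\<infinity>(\<real>\<^sup>n)/I\<close>, the coproduct \<open>A \<otimes> W = C\<^sup>\<infinity>(\<real>\<^sup>n\<^sup>+\<^sup>k)/(I, J)\<close> is the free
  \<open>A\<close>-module on the \<open>e\<^sub>i\<close>: expanding \<open>F(x, y)\<close> by Hadamard's lemma around the point of \<open>D\<close>
  and using that the maximal ideal of \<open>W\<close> is nilpotent, every \<open>F\<close> is congruent to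
  \<open>\<Sum>\<^sub>i C\<^sub>i(x) e\<^sub>i(y)\<close>, and the coefficients \<open>C\<^sub>i(x)\<close> are the \<open>W\<close>-coordinates of \<open>F(x, -)\<close>.
  Hence a morphism \<open>C\<^sup>\<infinity>(\<real>\<^sup>m)/K \<rightarrow> A \<otimes> W\<close>, determined by the images
  \<open>\<Sum>\<^sub>i b\<^sub>j\<^sub>,\<^sub>i e\<^sub>i\<close> of the coordinates, is the same as a family \<open>(b\<^sub>j\<^sub>,\<^sub>i)\<close> of \<open>md\<close> elements of
  \<open>A\<close> annihilating the \<open>e\<close>-coefficients of \<open>\<kappa>(\<Sum>\<^sub>i x\<^sub>j\<^sub>,\<^sub>i e\<^sub>i)\<close> for \<open>\<kappa> \<in> K\<close>, i.e. a morphism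
  \<open>C\<^sup>\<infinity>(\<real>\<^sup>m\<^sup>d)/L \<rightarrow> A\<close>, where \<open>L\<close> is the ideal generated by these coefficients. So
  \<open>Y\<^sup>D = Spec C\<^sup>\<infinity>(\<real>\<^sup>m\<^sup>d)/L\<close> (the Weil restriction), and naturality in \<open>A\<close> is a direct
  computation.\<close>

section \<open>Smooth functions\<close>

definition trunc :: "nat \<Rightarrow> (nat \<Rightarrow> real) \<Rightarrow> (nat \<Rightarrow> real)" where
  "trunc n x = (\<lambda>i. if i < n then x i else 0)"

definition has_partial :: "nat \<Rightarrow> fn \<Rightarrow> fn \<Rightarrow> bool" where
  "has_partial i f f' \<longleftrightarrow> (\<forall>x. ((\<lambda>t. f (x(i := t))) has_real_derivative f' x) (at (x i)))"

lemma trunc_trunc [simp]: "trunc n (trunc n x) = trunc n x"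
  by (auto simp: trunc_def)

lemma smooth_iff: "smooth n f \<longleftrightarrow> (\<forall>x. f x = f (trunc n x)) \<and> continuous_on UNIV f \<and>
   (\<forall>i<n. \<exists>f'. smooth n f' \<and> has_partial i f f')"
  unfolding trunc_def has_partial_def by (subst smooth.simps) auto

lemma smooth_coinduct_set:
  assumes "f \<in> X"
    and "\<And>f. f \<in> X \<Longrightarrow> (\<forall>x. f x = f (trunc n x)) \<and> continuous_on UNIV f \<and>
          (\<forall>i<n. \<exists>f'. (f' \<in> X \<or> smooth n f') \<and> has_partial i f f')"
  shows "smooth n f"
  using assms(1)
proof (coinduction arbitrary: f rule: smooth.coinduct)
  case (smooth f)
  from assms(2)[OF smooth] show ?case unfolding trunc_def has_partial_def by metis
qed

lemma smooth_dep: "smooth n f \<Longrightarrow> f x = f (trunc n x)"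
  using smooth_iff by blast

lemma smooth_cont: "smooth n f \<Longrightarrow> continuous_on UNIV f"
  using smooth_iff by blast

definition partial_deriv :: "nat \<Rightarrow> nat \<Rightarrow> fn \<Rightarrow> fn" where
  "partial_deriv n i f = (SOME f'. smooth n f' \<and> has_partial i f f')"

lemma
  assumes "smooth n f" "i < n"
  shows smooth_partial_deriv: "smooth n (partial_deriv n i f)"
    and has_partial_partial_deriv: "has_partial i f (partial_deriv n i f)"
proof -
  from assms have "\<exists>f'. smooth n f' \<and> has_partial i f f'" using smooth_iff by blast
  then have "smooth n (partial_deriv n i f) \<and> has_partial i f (partial_deriv n i f)"
    unfolding partial_deriv_def by (rule someI_ex)
  then show "smooth n (partial_deriv n i f)" "has_partial i f (partial_deriv n i f)" by auto
qed

lemma smooth_const: "smooth n (\<lambda>x. c)"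
proof -
  have "(\<lambda>x. c) \<in> {(\<lambda>x. c) | c. True}" by auto
  then show ?thesis
  proof (rule smooth_coinduct_set)
    fix f :: fn assume "f \<in> {(\<lambda>x. c) | c::real. True}"
    then obtain c where f: "f = (\<lambda>x. c)" by auto
    have "has_partial i f (\<lambda>x. 0)" for i unfolding f has_partial_def by auto
    then show "(\<forall>x. f x = f (trunc n x)) \<and> continuous_on UNIV f \<and>
          (\<forall>i<n. \<exists>f'. (f' \<in> {(\<lambda>x. c) | c::real. True} \<or> smooth n f') \<and> has_partial i f f')"
    proof (intro conjI allI impI)
      show "continuous_on UNIV f" unfolding f by simp
      fix i assume "i < n"
      show "\<exists>f'. (f' \<in> {(\<lambda>x. c) | c::real. True} \<or> smooth n f') \<and> has_partial i f f'"
        by (rule exI[of _ "\<lambda>x. 0"]) (auto simp: f has_partial_def)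
    qed (simp add: f)
  qed
qed

lemma smooth_coord: assumes "j < n" shows "smooth n (\<lambda>x. x j)"
proof -
  have "(\<lambda>x. x j) \<in> {(\<lambda>x. x j)}" by auto
  then show ?thesis
  proof (rule smooth_coinduct_set)
    fix f assume "f \<in> {(\<lambda>x::nat\<Rightarrow>real. x j)}"
    then have f: "f = (\<lambda>x. x j)" by auto
    have "has_partial i f (\<lambda>x. if i = j then 1 else 0)" for i
      unfolding f has_partial_def by (auto intro!: derivative_eq_intros)
    then show "(\<forall>x. f x = f (trunc n x)) \<and> continuous_on UNIV f \<and>
          (\<forall>i<n. \<exists>f'. (f' \<in> {(\<lambda>x::nat\<Rightarrow>real. x j)} \<or> smooth n f') \<and> has_partial i f f')"
      unfolding f using assms by (auto simp: trunc_def intro!: smooth_const)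
  qed
qed

text \<open>Products are not closed under differentiation (product rule), so the coinduction for
  \<open>smooth_mult\<close> runs over sums of products.\<close>
inductive_set sum_of_products :: "nat \<Rightarrow> fn set" for n where
  sop_mult: "smooth n f \<Longrightarrow> smooth n g \<Longrightarrow> (\<lambda>x. f x * g x) \<in> sum_of_products n"
| sop_add: "f \<in> sum_of_products n \<Longrightarrow> g \<in> sum_of_products n \<Longrightarrow> (\<lambda>x. f x + g x) \<in> sum_of_products n"

lemma sum_of_products_step:
  assumes "f \<in> sum_of_products n"
  shows "(\<forall>x. f x = f (trunc n x)) \<and> continuous_on UNIV f \<and>
          (\<forall>i<n. \<exists>f'. f' \<in> sum_of_products n \<and> has_partial i f f')"
  using assms
proof induction
  case (sop_mult f g)
  have c: "continuous_on UNIV (\<lambda>x. f x * g x)"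
    using smooth_cont[OF sop_mult(1)] smooth_cont[OF sop_mult(2)] by (intro continuous_intros)
  have d: "\<exists>f'. f' \<in> sum_of_products n \<and> has_partial i (\<lambda>x. f x * g x) f'" if "i < n" for i
  proof -
    note f' = smooth_partial_deriv[OF sop_mult(1) that] has_partial_partial_deriv[OF sop_mult(1) that]
    note g' = smooth_partial_deriv[OF sop_mult(2) that] has_partial_partial_deriv[OF sop_mult(2) that]
    let ?h = "\<lambda>x. (\<lambda>x. partial_deriv n i f x * g x) x + (\<lambda>x. f x * partial_deriv n i g x) x"
    have "?h \<in> sum_of_products n" using f'(1) g'(1) sop_mult by (intro sum_of_products.intros)
    moreover have "has_partial i (\<lambda>x. f x * g x) ?h"
      unfolding has_partial_def
    proof
      fix x
      have "((\<lambda>t. f (x(i := t))) has_real_derivative partial_deriv n i f x) (at (x i))"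
        using f'(2) unfolding has_partial_def by blast
      moreover have "((\<lambda>t. g (x(i := t))) has_real_derivative partial_deriv n i g x) (at (x i))"
        using g'(2) unfolding has_partial_def by blast
      ultimately have "((\<lambda>t. f (x(i := t)) * g (x(i := t))) has_real_derivative
          partial_deriv n i f x * g (x(i := x i)) + partial_deriv n i g x * f (x(i := x i))) (at (x i))"
        by (rule DERIV_mult)
      then show "((\<lambda>t. f (x(i := t)) * g (x(i := t))) has_real_derivative ?h x) (at (x i))"
        by (simp add: mult.commute)
    qed
    ultimately show ?thesis by blast
  qed
  show ?case using smooth_dep[OF sop_mult(1)] smooth_dep[OF sop_mult(2)] c d by metis
next
  case (sop_add f g)
  have c: "continuous_on UNIV (\<lambda>x. f x + g x)"
    using sop_add.IH by (intro continuous_intros) auto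
  have d: "\<exists>f'. f' \<in> sum_of_products n \<and> has_partial i (\<lambda>x. f x + g x) f'" if i: "i < n" for i
  proof -
    obtain f' g' where f': "f' \<in> sum_of_products n" "has_partial i f f'" and g': "g' \<in> sum_of_products n" "has_partial i g g'"
      using sop_add.IH i by blast
    have "(\<lambda>x. f' x + g' x) \<in> sum_of_products n" using f' g' by (intro sum_of_products.intros)
    moreover have "has_partial i (\<lambda>x. f x + g x) (\<lambda>x. f' x + g' x)"
      using f'(2) g'(2) unfolding has_partial_def by (auto intro!: DERIV_add)
    ultimately show ?thesis by blast
  qed
  show ?case using sop_add.IH c d by metis
qed

lemma smooth_sum_of_products: "f \<in> sum_of_products n \<Longrightarrow> smooth n f"
  by (erule smooth_coinduct_set) (use sum_of_products_step in blast)

lemma smooth_mult: "smooth n f \<Longrightarrow> smooth n g \<Longrightarrow> smooth n (\<lambda>x. f x * g x)"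
  by (rule smooth_sum_of_products, rule sop_mult)

lemma smooth_add: "smooth n f \<Longrightarrow> smooth n g \<Longrightarrow> smooth n (\<lambda>x. f x + g x)"
proof -
  assume "smooth n f" "smooth n g"
  then have "(\<lambda>x. (\<lambda>x. f x * 1) x + (\<lambda>x. g x * 1) x) \<in> sum_of_products n"
    by (intro sop_add[of "\<lambda>x. f x * 1" n "\<lambda>x. g x * 1"] sop_mult[of n _ "\<lambda>x. 1"] smooth_const)
  then show ?thesis by (auto dest: smooth_sum_of_products)
qed

lemma smooth_scale: "smooth n f \<Longrightarrow> smooth n (\<lambda>x. c * f x)"
  using smooth_mult[OF smooth_const] .

lemma smooth_neg: "smooth n f \<Longrightarrow> smooth n (\<lambda>x. - f x)"
  using smooth_scale[of n f "-1"] by simp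

lemma smooth_diff: "smooth n f \<Longrightarrow> smooth n g \<Longrightarrow> smooth n (\<lambda>x. f x - g x)"
  using smooth_add[OF _ smooth_neg, of n f g] by simp

lemma smooth_sum: "(\<And>a. a \<in> A \<Longrightarrow> smooth n (F a)) \<Longrightarrow> smooth n (\<lambda>x. \<Sum>a\<in>A. F a x)"
proof (induction A rule: infinite_finite_induct)
  case (infinite A) then show ?case by (simp add: smooth_const)
next
  case empty then show ?case by (simp add: smooth_const)
next
  case (insert a A) then show ?case by (simp add: smooth_add)
qed

lemma smooth_prod: "(\<And>a. a \<in> A \<Longrightarrow> smooth n (F a)) \<Longrightarrow> smooth n (\<lambda>x. \<Prod>a\<in>A. F a x)"
proof (induction A rule: infinite_finite_induct)
  case (infinite A) then show ?case by (simp add: smooth_const)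
next
  case empty then show ?case by (simp add: smooth_const)
next
  case (insert a A) then show ?case by (simp add: smooth_mult)
qed

lemma smooth_mono:
  assumes "smooth n f" "n \<le> n'" shows "smooth n' f"
proof -
  have "f \<in> {f. \<exists>n\<le>n'. smooth n f}" using assms by auto
  then show ?thesis
  proof (rule smooth_coinduct_set)
    fix f assume "f \<in> {f. \<exists>n\<le>n'. smooth n f}"
    then obtain n where n: "n \<le> n'" "smooth n f" by auto
    have dep: "f x = f (trunc n' x)" for x
    proof -
      have "trunc n (trunc n' x) = trunc n x" using n(1) by (auto simp: trunc_def)
      then show ?thesis using smooth_dep[OF n(2), of x] smooth_dep[OF n(2), of "trunc n' x"] by simp
    qed
    have d: "\<exists>f'. (f' \<in> {f. \<exists>n\<le>n'. smooth n f} \<or> smooth n' f') \<and> has_partial i f f'" if "i < n'" for i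
    proof (cases "i < n")
      case True
      then show ?thesis using smooth_partial_deriv[OF n(2) True] has_partial_partial_deriv[OF n(2) True] n(1) by blast
    next
      case False
      have "f (x(i := t)) = f x" for x t
      proof -
        have "trunc n (x(i := t)) = trunc n x" using False by (auto simp: trunc_def)
        then show ?thesis using smooth_dep[OF n(2), of x] smooth_dep[OF n(2), of "x(i:=t)"] by simp
      qed
      then have "has_partial i f (\<lambda>x. 0)" unfolding has_partial_def by simp
      then show ?thesis using smooth_const by blast
    qed
    show "(\<forall>x. f x = f (trunc n' x)) \<and> continuous_on UNIV f \<and>
          (\<forall>i<n'. \<exists>f'. (f' \<in> {f. \<exists>n\<le>n'. smooth n f} \<or> smooth n' f') \<and> has_partial i f f')"
      using dep d smooth_cont[OF n(2)] by blast
  qed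
qed

section \<open>Hadamard's lemma and closure under composition\<close>

definition prefix_merge :: "nat \<Rightarrow> (nat \<Rightarrow> real) \<Rightarrow> (nat \<Rightarrow> real) \<Rightarrow> (nat \<Rightarrow> real)" where
  "prefix_merge j u v = (\<lambda>l. if l < j then u l else v l)"

definition hadamard_coeff :: "nat \<Rightarrow> fn \<Rightarrow> nat \<Rightarrow> (nat \<Rightarrow> real) \<Rightarrow> (nat \<Rightarrow> real) \<Rightarrow> real" where
  "hadamard_coeff k G j u v = integral {0..1} (\<lambda>s. partial_deriv k j G ((prefix_merge j u v)(j := v j + s * (u j - v j))))"

lemma hadamard_step:
  assumes "smooth k G" "j < k"
  shows "G (prefix_merge (Suc j) u v) - G (prefix_merge j u v) = hadamard_coeff k G j u v * (u j - v j)"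
proof -
  let ?m = "prefix_merge j u v"
  define \<phi> where "\<phi> s = G (?m(j := v j + s * (u j - v j)))" for s
  have h: "has_partial j G (partial_deriv k j G)" using has_partial_partial_deriv[OF assms] .
  have D: "(\<phi> has_real_derivative partial_deriv k j G (?m(j := v j + s*(u j - v j))) * (u j - v j)) (at s)" for s
  proof -
    have 1: "((\<lambda>\<tau>. G (?m(j := \<tau>))) has_real_derivative partial_deriv k j G (?m(j := v j + s*(u j - v j)))) (at (v j + s*(u j - v j)))"
      using h[unfolded has_partial_def, rule_format, of "?m(j := v j + s*(u j - v j))"] by simp
    have 2: "((\<lambda>s. v j + s*(u j - v j)) has_real_derivative (u j - v j)) (at s)"
      by (auto intro!: derivative_eq_intros)
    from DERIV_chain2[OF 1 2] show ?thesis unfolding \<phi>_def by simp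
  qed
  have "((\<lambda>s. partial_deriv k j G (?m(j := v j + s*(u j - v j))) * (u j - v j)) has_integral (\<phi> 1 - \<phi> 0)) {0..1}"
    by (rule fundamental_theorem_of_calculus)
       (auto simp: has_real_derivative_iff_has_vector_derivative[symmetric] intro!: has_field_derivative_at_within D)
  then have "integral {0..1} (\<lambda>s. partial_deriv k j G (?m(j := v j + s*(u j - v j))) * (u j - v j)) = \<phi> 1 - \<phi> 0"
    by (rule integral_unique)
  moreover have "?m(j := v j + 1 * (u j - v j)) = prefix_merge (Suc j) u v"
    by (auto simp: prefix_merge_def fun_eq_iff)
  moreover have "?m(j := v j + 0 * (u j - v j)) = ?m"
    by (auto simp: prefix_merge_def fun_eq_iff)
  ultimately show ?thesis unfolding \<phi>_def hadamard_coeff_def by simp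
qed

lemma hadamard_identity:
  assumes "smooth k G"
  shows "G u - G v = (\<Sum>j<k. hadamard_coeff k G j u v * (u j - v j))"
proof -
  have "(\<Sum>j<k. G (prefix_merge (Suc j) u v) - G (prefix_merge j u v)) = G (prefix_merge k u v) - G (prefix_merge 0 u v)"
    by (rule sum_lessThan_telescope)
  moreover have "prefix_merge 0 u v = v" by (simp add: prefix_merge_def)
  moreover have "G (prefix_merge k u v) = G u"
  proof -
    have "trunc k (prefix_merge k u v) = trunc k u" by (auto simp: trunc_def prefix_merge_def)
    then show ?thesis using smooth_dep[OF assms, of u] smooth_dep[OF assms, of "prefix_merge k u v"] by simp
  qed
  moreover have "(\<Sum>j<k. G (prefix_merge (Suc j) u v) - G (prefix_merge j u v)) = (\<Sum>j<k. hadamard_coeff k G j u v * (u j - v j))"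
    using hadamard_step[OF assms] by simp
  ultimately show ?thesis by simp
qed

lemma hadamard_coeff_continuous:
  assumes "smooth k G" "j < k"
  shows "continuous_on UNIV (\<lambda>p. hadamard_coeff k G j (fst p) (snd p))"
proof -
  have pc: "continuous_on UNIV (partial_deriv k j G)" using smooth_partial_deriv[OF assms] smooth_cont by blast
  define inner where "inner = (\<lambda>q::((nat\<Rightarrow>real)\<times>(nat\<Rightarrow>real))\<times>real. (\<lambda>l. if l = j then snd (fst q) j + snd q * (fst (fst q) j - snd (fst q) j)
       else if l < j then fst (fst q) l else snd (fst q) l))"
  have ic: "continuous_on UNIV inner"
  proof (rule continuous_on_coordinatewise_then_product)
    fix l
    have c1: "continuous_on UNIV (\<lambda>q::((nat\<Rightarrow>real)\<times>(nat\<Rightarrow>real))\<times>real. fst (fst q) l)" for l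
      by (rule continuous_on_product_then_coordinatewise) (intro continuous_intros)
    have c2: "continuous_on UNIV (\<lambda>q::((nat\<Rightarrow>real)\<times>(nat\<Rightarrow>real))\<times>real. snd (fst q) l)" for l
      by (rule continuous_on_product_then_coordinatewise) (intro continuous_intros)
    have c3: "continuous_on UNIV (\<lambda>q::((nat\<Rightarrow>real)\<times>(nat\<Rightarrow>real))\<times>real. snd q)"
      by (intro continuous_intros)
    show "continuous_on UNIV (\<lambda>q. inner q l)"
      unfolding inner_def
      by (cases "l = j"; cases "l < j") (simp_all add: c1 c2 continuous_on_add continuous_on_mult c3 continuous_on_diff)
  qed
  have "continuous_on UNIV (\<lambda>q. partial_deriv k j G (inner q))"
    using continuous_on_compose2[OF pc ic] by simp
  then have c2: "continuous_on (UNIV \<times> cbox 0 1) (\<lambda>(p, s). partial_deriv k j G (inner (p, s)))"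
    by (auto intro: continuous_on_subset simp: case_prod_beta)
  have "continuous_on UNIV (\<lambda>p. integral (cbox 0 (1::real)) (\<lambda>s. partial_deriv k j G (inner (p, s))))"
    by (rule integral_continuous_on_param[OF c2])
  moreover have "inner (p, s) = (prefix_merge j (fst p) (snd p))(j := snd p j + s * (fst p j - snd p j))" for p s
    by (auto simp: inner_def prefix_merge_def fun_eq_iff)
  ultimately show ?thesis unfolding hadamard_coeff_def by simp
qed

lemma hadamard_coeff_diag:
  assumes "smooth k G" "j < k"
  shows "hadamard_coeff k G j w w = partial_deriv k j G w"
proof -
  have "(prefix_merge j w w)(j := w j + s * (w j - w j)) = w" for s by (auto simp: prefix_merge_def fun_eq_iff)
  then show ?thesis unfolding hadamard_coeff_def by simp
qed

lemma chain_rule: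
  assumes G: "smooth k G" and c: "isCont \<gamma> t0"
    and d: "\<forall>j<k. ((\<lambda>t. \<gamma> t j) has_real_derivative \<gamma>' j) (at t0)"
  shows "((\<lambda>t. G (\<gamma> t)) has_real_derivative (\<Sum>j<k. partial_deriv k j G (\<gamma> t0) * \<gamma>' j)) (at t0)"
proof -
  have "\<forall>j<k. \<exists>g. (\<forall>z. \<gamma> z j - \<gamma> t0 j = g z * (z - t0)) \<and> isCont g t0 \<and> g t0 = \<gamma>' j"
    using d by (simp add: CARAT_DERIV)
  then obtain g where g: "\<And>j. j < k \<Longrightarrow> (\<forall>z. \<gamma> z j - \<gamma> t0 j = g j z * (z - t0)) \<and> isCont (g j) t0 \<and> g j t0 = \<gamma>' j"
    by metis
  define F where "F z = (\<Sum>j<k. hadamard_coeff k G j (\<gamma> z) (\<gamma> t0) * g j z)" for z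
  have "\<forall>z. G (\<gamma> z) - G (\<gamma> t0) = F z * (z - t0)"
  proof
    fix z
    have "G (\<gamma> z) - G (\<gamma> t0) = (\<Sum>j<k. hadamard_coeff k G j (\<gamma> z) (\<gamma> t0) * (\<gamma> z j - \<gamma> t0 j))"
      by (rule hadamard_identity[OF G])
    also have "\<dots> = (\<Sum>j<k. hadamard_coeff k G j (\<gamma> z) (\<gamma> t0) * g j z * (z - t0))"
      using g by (simp add: mult.assoc)
    also have "\<dots> = F z * (z - t0)" unfolding F_def by (simp add: sum_distrib_right)
    finally show "G (\<gamma> z) - G (\<gamma> t0) = F z * (z - t0)" .
  qed
  moreover have "isCont F t0"
  proof -
    have "isCont (\<lambda>z. hadamard_coeff k G j (\<gamma> z) (\<gamma> t0)) t0" if "j < k" for j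
    proof -
      have hc: "continuous_on UNIV (\<lambda>p. hadamard_coeff k G j (fst p) (snd p))" by (rule hadamard_coeff_continuous[OF G that])
      have A: "isCont (\<lambda>p. hadamard_coeff k G j (fst p) (snd p)) (\<gamma> t0, \<gamma> t0)"
        using hc by (simp add: continuous_on_eq_continuous_at)
      have B: "isCont (\<lambda>z. (\<gamma> z, \<gamma> t0)) t0" using c by (intro continuous_intros)
      have "isCont (\<lambda>z. (\<lambda>p. hadamard_coeff k G j (fst p) (snd p)) ((\<lambda>z. (\<gamma> z, \<gamma> t0)) z)) t0"
        by (rule isCont_o2[OF B]) (simp add: A)
      then show ?thesis by simp
    qed
    then show ?thesis unfolding F_def using g by (intro continuous_intros) auto
  qed
  moreover have "F t0 = (\<Sum>j<k. partial_deriv k j G (\<gamma> t0) * \<gamma>' j)"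
    unfolding F_def using g hadamard_coeff_diag[OF G] by simp
  ultimately show ?thesis by (subst CARAT_DERIV) blast
qed

lemma continuous_on_fun_upd: "continuous_on UNIV (\<lambda>t::real. x(i := t))"
proof (rule continuous_on_coordinatewise_then_product)
  fix l show "continuous_on UNIV (\<lambda>t. (x(i := t)) l)"
    by (cases "l = i") (simp_all add: continuous_on_id continuous_on_const)
qed

lemma continuous_on_smooth_tuple:
  assumes "\<forall>j<k. smooth n (fs j)"
  shows "continuous_on UNIV (\<lambda>x. \<lambda>j. if j < k then fs j x else 0)"
proof (rule continuous_on_coordinatewise_then_product)
  fix j show "continuous_on UNIV (\<lambda>x. if j < k then fs j x else 0)"
    using assms smooth_cont by (cases "j < k") auto
qed

lemma continuous_on_cinf_op:
  assumes G: "smooth k G" and fs: "\<forall>j<k. smooth n (fs j)"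
  shows "continuous_on UNIV (cinf_op k G fs)"
  using continuous_on_compose2[OF smooth_cont[OF G] continuous_on_smooth_tuple[OF fs]]
  unfolding cinf_op_def by simp

text \<open>The chain rule expresses the partial derivative of a composite again as a composite,
  of the smooth function \<open>(w, w') \<mapsto> \<Sum>\<^sub>j \<partial>\<^sub>jG(w) w'\<^sub>j\<close> on \<open>\<real>\<^sup>2\<^sup>k\<close> with the \<open>f\<^sub>j\<close> and
  their partial derivatives.\<close>
lemma has_partial_cinf_op:
  assumes G: "smooth k G" and fs: "\<forall>j<k. smooth n (fs j)" and i: "i < n"
  shows "has_partial i (cinf_op k G fs)
     (cinf_op (2*k) (\<lambda>w. \<Sum>j<k. partial_deriv k j G w * w (k + j))
        (\<lambda>j. if j < k then fs j else partial_deriv n i (fs (j - k))))"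
    (is "has_partial i _ (cinf_op (2*k) ?G' ?fs')")
  unfolding has_partial_def
proof
  fix x
  define \<gamma> where "\<gamma> t = (\<lambda>j. if j < k then fs j (x(i := t)) else 0)" for t
  have "continuous_on UNIV \<gamma>"
    using continuous_on_compose2[OF continuous_on_smooth_tuple[OF fs] continuous_on_fun_upd[of x i]]
    unfolding \<gamma>_def by simp
  then have "isCont \<gamma> (x i)" by (simp add: continuous_on_eq_continuous_at)
  moreover have "\<forall>j<k. ((\<lambda>t. \<gamma> t j) has_real_derivative partial_deriv n i (fs j) x) (at (x i))"
  proof (intro allI impI)
    fix j assume j: "j < k"
    with fs have "has_partial i (fs j) (partial_deriv n i (fs j))"
      using has_partial_partial_deriv[OF _ i] by blast
    with j show "((\<lambda>t. \<gamma> t j) has_real_derivative partial_deriv n i (fs j) x) (at (x i))"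
      unfolding has_partial_def \<gamma>_def by simp
  qed
  ultimately have "((\<lambda>t. G (\<gamma> t)) has_real_derivative
      (\<Sum>j<k. partial_deriv k j G (\<gamma> (x i)) * partial_deriv n i (fs j) x)) (at (x i))"
    by (rule chain_rule[OF G])
  moreover have "cinf_op (2*k) ?G' ?fs' x =
      (\<Sum>j<k. partial_deriv k j G (\<gamma> (x i)) * partial_deriv n i (fs j) x)"
  proof -
    define w where "w = (\<lambda>j. if j < 2*k then ?fs' j x else 0)"
    have "partial_deriv k j G w = partial_deriv k j G (\<gamma> (x i))" if "j < k" for j
    proof -
      have "trunc k w = trunc k (\<gamma> (x i))" by (auto simp: w_def trunc_def \<gamma>_def)
      then show ?thesis
        using smooth_dep[OF smooth_partial_deriv[OF G that], of w]
          smooth_dep[OF smooth_partial_deriv[OF G that], of "\<gamma> (x i)"] by simp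
    qed
    moreover have "w (k + j) = partial_deriv n i (fs j) x" if "j < k" for j
      using that by (simp add: w_def)
    ultimately have "(\<Sum>j<k. partial_deriv k j G w * w (k + j)) =
        (\<Sum>j<k. partial_deriv k j G (\<gamma> (x i)) * partial_deriv n i (fs j) x)"
      by (intro sum.cong) auto
    then show ?thesis unfolding cinf_op_def w_def by simp
  qed
  ultimately show "((\<lambda>t. cinf_op k G fs (x(i := t))) has_real_derivative
      cinf_op (2*k) ?G' ?fs' x) (at (x i))"
    unfolding cinf_op_def \<gamma>_def by simp
qed

lemma smooth_cinf_op:
  assumes "smooth k G" "\<forall>j<k. smooth n (fs j)"
  shows "smooth n (cinf_op k G fs)"
proof -
  let ?X = "{cinf_op k G fs | k G fs. smooth k G \<and> (\<forall>j<k. smooth n (fs j))}"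
  have "cinf_op k G fs \<in> ?X" using assms by blast
  then show ?thesis
  proof (rule smooth_coinduct_set)
    fix F assume "F \<in> ?X"
    then obtain k G fs where G: "smooth k G" and fs: "\<forall>j<k. smooth n (fs j)"
      and F: "F = cinf_op k G fs" by blast
    have "F x = F (trunc n x)" for x
    proof -
      have "(\<lambda>j. if j < k then fs j x else 0) = (\<lambda>j. if j < k then fs j (trunc n x) else 0)"
        using fs smooth_dep by auto
      then show ?thesis unfolding F cinf_op_def by simp
    qed
    moreover have "\<exists>f'. (f' \<in> ?X \<or> smooth n f') \<and> has_partial i F f'" if i: "i < n" for i
    proof (intro exI conjI disjI1)
      show "has_partial i F (cinf_op (2*k) (\<lambda>w. \<Sum>j<k. partial_deriv k j G w * w (k + j))
          (\<lambda>j. if j < k then fs j else partial_deriv n i (fs (j - k))))"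
        unfolding F by (rule has_partial_cinf_op[OF G fs i])
      have "smooth (2*k) (\<lambda>w. \<Sum>j<k. partial_deriv k j G w * w (k + j))"
        by (intro smooth_sum smooth_mult smooth_coord smooth_mono[OF smooth_partial_deriv[OF G]]) auto
      moreover have "\<forall>j<2*k. smooth n (if j < k then fs j else partial_deriv n i (fs (j - k)))"
        using fs smooth_partial_deriv[OF _ i] by auto
      ultimately show "cinf_op (2*k) (\<lambda>w. \<Sum>j<k. partial_deriv k j G w * w (k + j))
          (\<lambda>j. if j < k then fs j else partial_deriv n i (fs (j - k))) \<in> ?X" by blast
    qed
    ultimately show "(\<forall>x. F x = F (trunc n x)) \<and> continuous_on UNIV F \<and>
          (\<forall>i<n. \<exists>f'. (f' \<in> ?X \<or> smooth n f') \<and> has_partial i F f')"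
      using continuous_on_cinf_op[OF G fs] F by blast
  qed
qed

definition integral_last :: "nat \<Rightarrow> fn \<Rightarrow> fn" where
  "integral_last n F = (\<lambda>x. integral {0..1} (\<lambda>s. F ((trunc n x)(n := s))))"

lemma continuous_on_trunc_upd: "continuous_on UNIV (\<lambda>p::(nat\<Rightarrow>real)\<times>real. (trunc n (fst p))(n := snd p))"
proof (rule continuous_on_coordinatewise_then_product)
  fix l
  have c1: "continuous_on UNIV (\<lambda>p::(nat\<Rightarrow>real)\<times>real. fst p l)"
    by (rule continuous_on_product_then_coordinatewise) (intro continuous_intros)
  show "continuous_on UNIV (\<lambda>p::(nat\<Rightarrow>real)\<times>real. ((trunc n (fst p))(n := snd p)) l)"
    by (cases "l = n"; cases "l < n") (simp_all add: trunc_def c1 continuous_on_snd continuous_on_id continuous_on_const)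
qed

lemma continuous_on_trunc_upd_upd: "continuous_on UNIV (\<lambda>p::real\<times>real. (trunc n (x(i := fst p)))(n := snd p))"
proof -
  have "continuous_on UNIV (\<lambda>p::real\<times>real. (x(i := fst p), snd p))"
    using continuous_on_compose2[OF continuous_on_fun_upd[of x i] continuous_on_fst[OF continuous_on_id]]
    by (intro continuous_on_Pair) (auto intro: continuous_on_snd continuous_on_id)
  from continuous_on_compose2[OF continuous_on_trunc_upd[of n] this] show ?thesis by simp
qed

lemma continuous_on_integral_last:
  assumes "continuous_on UNIV F"
  shows "continuous_on UNIV (integral_last n F)"
proof -
  have "continuous_on UNIV (\<lambda>p. F ((trunc n (fst p))(n := snd p)))"
    using continuous_on_compose2[OF assms continuous_on_trunc_upd[of n]] by simp
  then have "continuous_on (UNIV \<times> cbox 0 1) (\<lambda>(x, s). F ((trunc n x)(n := s)))"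
    by (auto intro: continuous_on_subset simp: case_prod_beta)
  from integral_continuous_on_param[OF this] show ?thesis unfolding integral_last_def by simp
qed

lemma has_partial_integral_last:
  assumes F: "smooth (Suc n) F" and i: "i < n"
  shows "has_partial i (integral_last n F) (integral_last n (partial_deriv (Suc n) i F))"
  unfolding has_partial_def
proof
  fix x
  have F's: "smooth (Suc n) (partial_deriv (Suc n) i F)"
    and F'h: "has_partial i F (partial_deriv (Suc n) i F)"
    using smooth_partial_deriv[OF F] has_partial_partial_deriv[OF F] i by auto
  define f where "f t s = F ((trunc n (x(i := t)))(n := s))" for t s
  define fx where "fx t s = partial_deriv (Suc n) i F ((trunc n (x(i := t)))(n := s))" for t s
  have fd: "((\<lambda>t. f t s) has_field_derivative fx t s) (at t within UNIV)" for t s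
  proof -
    let ?p = "(trunc n (x(i := t)))(n := s)"
    have "((\<lambda>t'. F (?p(i := t'))) has_real_derivative fx t s) (at (?p i))"
      using F'h unfolding has_partial_def fx_def by blast
    moreover have "?p i = t" using i by (simp add: trunc_def)
    moreover have "f t' s = F (?p(i := t'))" for t'
      unfolding f_def using i by (auto simp: trunc_def intro!: arg_cong[where f=F])
    ultimately show ?thesis by simp
  qed
  have fc: "continuous_on UNIV (\<lambda>p::real\<times>real. f (fst p) (snd p))"
    unfolding f_def
    using continuous_on_compose2[OF smooth_cont[OF F] continuous_on_trunc_upd_upd[of n x i]] by simp
  have int: "f t integrable_on cbox 0 1" for t
  proof -
    have "continuous_on UNIV (\<lambda>s. f t s)"
      using continuous_on_compose2[OF fc continuous_on_Pair[OF continuous_on_const continuous_on_id]]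
      by simp
    then show ?thesis by (auto intro: integrable_continuous_interval continuous_on_subset)
  qed
  have "continuous_on UNIV (\<lambda>p::real\<times>real. fx (fst p) (snd p))"
    unfolding fx_def
    using continuous_on_compose2[OF smooth_cont[OF F's] continuous_on_trunc_upd_upd[of n x i]] by simp
  then have fxc: "continuous_on (UNIV \<times> cbox 0 1) (\<lambda>(t, s). fx t s)"
    by (auto intro: continuous_on_subset simp: case_prod_beta)
  have "((\<lambda>t. integral (cbox 0 1) (f t)) has_field_derivative integral (cbox 0 1) (fx (x i)))
      (at (x i) within UNIV)"
    by (rule leibniz_rule_field_derivative[OF fd int fxc]) auto
  then show "((\<lambda>t. integral_last n F (x(i := t))) has_real_derivative
      integral_last n (partial_deriv (Suc n) i F) x) (at (x i))"
    unfolding integral_last_def f_def fx_def by simp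
qed

lemma smooth_integral_last:
  assumes "smooth (Suc n) F"
  shows "smooth n (integral_last n F)"
proof -
  let ?X = "{integral_last n F | F. smooth (Suc n) F}"
  have "integral_last n F \<in> ?X" using assms by blast
  then show ?thesis
  proof (rule smooth_coinduct_set)
    fix P assume "P \<in> ?X"
    then obtain F where F: "smooth (Suc n) F" and P: "P = integral_last n F" by blast
    have "P x = P (trunc n x)" for x unfolding P integral_last_def by simp
    moreover have "continuous_on UNIV P"
      unfolding P by (rule continuous_on_integral_last[OF smooth_cont[OF F]])
    moreover have "\<exists>f'. (f' \<in> ?X \<or> smooth n f') \<and> has_partial i P f'" if "i < n" for i
    proof (intro exI conjI disjI1)
      show "has_partial i P (integral_last n (partial_deriv (Suc n) i F))"
        unfolding P by (rule has_partial_integral_last[OF F that])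
      show "integral_last n (partial_deriv (Suc n) i F) \<in> ?X"
        using smooth_partial_deriv[OF F, of i] that by auto
    qed
    ultimately show "(\<forall>x. P x = P (trunc n x)) \<and> continuous_on UNIV P \<and>
          (\<forall>i<n. \<exists>f'. (f' \<in> ?X \<or> smooth n f') \<and> has_partial i P f')" by blast
  qed
qed

text \<open>The Hadamard coefficient as a function of \<open>(u, v) \<in> \<real>\<^sup>2\<^sup>k\<close>; it is smooth, being a
  parameter integral of a composite of \<open>\<partial>\<^sub>jG\<close>.\<close>
definition hadamard_fun :: "nat \<Rightarrow> fn \<Rightarrow> nat \<Rightarrow> fn" where
  "hadamard_fun k G j = (\<lambda>z. hadamard_coeff k G j (trunc k z) (\<lambda>l. if l < k then z (k + l) else 0))"

lemma smooth_hadamard_fun: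
  assumes G: "smooth k G" and j: "j < k"
  shows "smooth (2*k) (hadamard_fun k G j)"
proof -
  define comps where "comps l = (\<lambda>w::nat\<Rightarrow>real. if l = j then w (k + j) + w (2*k) * (w j - w (k + j))
      else if l < j then w l else w (k + l))" for l
  have cs: "smooth (Suc (2*k)) (comps l)" if "l < k" for l
    unfolding comps_def using that j
    by (cases "l = j"; cases "l < j") (auto intro!: smooth_add smooth_mult smooth_diff smooth_coord)
  have Fs: "smooth (Suc (2*k)) (cinf_op k (partial_deriv k j G) comps)"
    by (rule smooth_cinf_op[OF smooth_partial_deriv[OF G j]]) (use cs in blast)
  have "hadamard_fun k G j = integral_last (2*k) (cinf_op k (partial_deriv k j G) comps)"
  proof
    fix z
    have "(\<lambda>l. if l < k then comps l ((trunc (2*k) z)(2*k := s)) else 0) =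
          (prefix_merge j (trunc k z) (\<lambda>l. if l < k then z (k + l) else 0))(j := (if j < k then z (k + j) else 0) + s * (trunc k z j - (if j < k then z (k + j) else 0)))" for s
      using j by (auto simp: fun_eq_iff comps_def prefix_merge_def trunc_def)
    then show "hadamard_fun k G j z = integral_last (2*k) (cinf_op k (partial_deriv k j G) comps) z"
      unfolding hadamard_fun_def hadamard_coeff_def integral_last_def cinf_op_def by simp
  qed
  with smooth_integral_last[OF Fs] show ?thesis by simp
qed

lemma hadamard_identity_fun:
  assumes G: "smooth k G"
  shows "G (trunc k u) - G (trunc k v) = (\<Sum>j<k. hadamard_fun k G j (\<lambda>l. if l < k then u l else if l < 2*k then v (l - k) else 0) * (u j - v j))"
proof -
  have "G (trunc k u) - G (trunc k v) = (\<Sum>j<k. hadamard_coeff k G j (trunc k u) (trunc k v) * (trunc k u j - trunc k v j))"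
    by (rule hadamard_identity[OF G])
  also have "\<dots> = (\<Sum>j<k. hadamard_fun k G j (\<lambda>l. if l < k then u l else if l < 2*k then v (l - k) else 0) * (u j - v j))"
  proof (rule sum.cong[OF refl])
    fix j assume "j \<in> {..<k}"
    then have j: "j < k" by simp
    have "trunc k (\<lambda>l. if l < k then u l else if l < 2*k then v (l - k) else 0) = trunc k u"
      by (auto simp: trunc_def)
    moreover have "(\<lambda>l. if l < k then (if k + l < k then u (k + l) else if k + l < 2*k then v (k + l - k) else 0) else 0) = trunc k v"
      by (auto simp: trunc_def fun_eq_iff)
    ultimately show "hadamard_coeff k G j (trunc k u) (trunc k v) * (trunc k u j - trunc k v j) =
        hadamard_fun k G j (\<lambda>l. if l < k then u l else if l < 2*k then v (l - k) else 0) * (u j - v j)"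
      using j unfolding hadamard_fun_def by (simp add: trunc_def)
  qed
  finally show ?thesis .
qed

section \<open>Ideals and morphisms of finitely generated \<open>C\<^sup>\<infinity>\<close>-algebras\<close>

lemma Cinf_const[simp,intro]: "(\<lambda>x. c) \<in> Cinf n" by (simp add: Cinf_def smooth_const)
lemma Cinf_coord[intro]: "j < n \<Longrightarrow> (\<lambda>x. x j) \<in> Cinf n" by (simp add: Cinf_def smooth_coord)
lemma Cinf_add[intro]: "f \<in> Cinf n \<Longrightarrow> g \<in> Cinf n \<Longrightarrow> (\<lambda>x. f x + g x) \<in> Cinf n"
  by (simp add: Cinf_def smooth_add)
lemma Cinf_mult[intro]: "f \<in> Cinf n \<Longrightarrow> g \<in> Cinf n \<Longrightarrow> (\<lambda>x. f x * g x) \<in> Cinf n"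
  by (simp add: Cinf_def smooth_mult)
lemma Cinf_diff[intro]: "f \<in> Cinf n \<Longrightarrow> g \<in> Cinf n \<Longrightarrow> (\<lambda>x. f x - g x) \<in> Cinf n"
  by (simp add: Cinf_def smooth_diff)
lemma Cinf_sum[intro]: "(\<And>a. a \<in> A \<Longrightarrow> F a \<in> Cinf n) \<Longrightarrow> (\<lambda>x. \<Sum>a\<in>A. F a x) \<in> Cinf n"
  by (simp add: Cinf_def smooth_sum)
lemma Cinf_prod[intro]: "(\<And>a. a \<in> A \<Longrightarrow> F a \<in> Cinf n) \<Longrightarrow> (\<lambda>x. \<Prod>a\<in>A. F a x) \<in> Cinf n"
  by (simp add: Cinf_def smooth_prod)
lemma Cinf_mono: "f \<in> Cinf n \<Longrightarrow> n \<le> n' \<Longrightarrow> f \<in> Cinf n'"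
  by (auto simp: Cinf_def intro: smooth_mono)
lemma Cinf_op[intro]: "G \<in> Cinf k \<Longrightarrow> (\<And>j. j < k \<Longrightarrow> fs j \<in> Cinf n) \<Longrightarrow> cinf_op k G fs \<in> Cinf n"
  by (simp add: Cinf_def smooth_cinf_op)
lemma Cinf_dep: "f \<in> Cinf n \<Longrightarrow> f x = f (\<lambda>i. if i < n then x i else 0)"
  using smooth_dep[of n f x] by (simp add: Cinf_def trunc_def)

lemma cinf_op_coord: "f \<in> Cinf p \<Longrightarrow> cinf_op p f (\<lambda>q x. x q) = f"
  unfolding cinf_op_def by (auto simp: fun_eq_iff Cinf_dep[symmetric])

lemma ideal_sub: "is_ideal n I \<Longrightarrow> f \<in> I \<Longrightarrow> f \<in> Cinf n"
  by (auto simp: is_ideal_def)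
lemma ideal_0: "is_ideal n I \<Longrightarrow> (\<lambda>x. 0) \<in> I"
  by (auto simp: is_ideal_def)
lemma ideal_add: "is_ideal n I \<Longrightarrow> f \<in> I \<Longrightarrow> g \<in> I \<Longrightarrow> (\<lambda>x. f x + g x) \<in> I"
  by (auto simp: is_ideal_def)
lemma ideal_lmult: "is_ideal n I \<Longrightarrow> a \<in> Cinf n \<Longrightarrow> f \<in> I \<Longrightarrow> (\<lambda>x. a x * f x) \<in> I"
  by (auto simp: is_ideal_def)
lemma ideal_rmult: "is_ideal n I \<Longrightarrow> a \<in> Cinf n \<Longrightarrow> f \<in> I \<Longrightarrow> (\<lambda>x. f x * a x) \<in> I"
  using ideal_lmult[of n I a f] by (simp add: mult.commute)
lemma ideal_scale: "is_ideal n I \<Longrightarrow> f \<in> I \<Longrightarrow> (\<lambda>x. c * f x) \<in> I"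
  using ideal_lmult[of n I "\<lambda>x. c" f] by simp
lemma ideal_neg: "is_ideal n I \<Longrightarrow> f \<in> I \<Longrightarrow> (\<lambda>x. - f x) \<in> I"
  using ideal_scale[of n I f "-1"] by simp
lemma ideal_diff: "is_ideal n I \<Longrightarrow> f \<in> I \<Longrightarrow> g \<in> I \<Longrightarrow> (\<lambda>x. f x - g x) \<in> I"
  using ideal_add[of n I f "\<lambda>x. - g x"] ideal_neg[of n I g] by simp
lemma ideal_sum: "is_ideal n I \<Longrightarrow> (\<And>a. a \<in> A \<Longrightarrow> F a \<in> I) \<Longrightarrow> (\<lambda>x. \<Sum>a\<in>A. F a x) \<in> I"
proof (induction A rule: infinite_finite_induct)
  case (infinite A) then show ?case by (simp add: ideal_0)
next
  case empty then show ?case by (simp add: ideal_0)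
next
  case (insert a A) then show ?case using ideal_add[of n I "F a" "\<lambda>x. \<Sum>a\<in>A. F a x"] by simp
qed
lemma is_ideal_Cinf: "is_ideal n (Cinf n)"
  by (auto simp: is_ideal_def)

lemma ceq_refl: "is_ideal n I \<Longrightarrow> ceq I f f"
  by (simp add: ceq_def ideal_0)
lemma ceq_eq: "is_ideal n I \<Longrightarrow> (\<And>x. f x = g x) \<Longrightarrow> ceq I f g"
  by (simp add: ceq_def ideal_0)
lemma ceq_sym: "is_ideal n I \<Longrightarrow> ceq I f g \<Longrightarrow> ceq I g f"
  unfolding ceq_def using ideal_neg[of n I "\<lambda>x. f x - g x"] by simp
lemma ceq_trans: "is_ideal n I \<Longrightarrow> ceq I f g \<Longrightarrow> ceq I g h \<Longrightarrow> ceq I f h"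
  unfolding ceq_def using ideal_add[of n I "\<lambda>x. f x - g x" "\<lambda>x. g x - h x"] by simp
lemma ceq_add: "is_ideal n I \<Longrightarrow> ceq I f f' \<Longrightarrow> ceq I g g' \<Longrightarrow> ceq I (\<lambda>x. f x + g x) (\<lambda>x. f' x + g' x)"
  unfolding ceq_def using ideal_add[of n I "\<lambda>x. f x - f' x" "\<lambda>x. g x - g' x"] by (simp add: algebra_simps)
lemma ceq_lmult: "is_ideal n I \<Longrightarrow> a \<in> Cinf n \<Longrightarrow> ceq I f g \<Longrightarrow> ceq I (\<lambda>x. a x * f x) (\<lambda>x. a x * g x)"
  unfolding ceq_def using ideal_lmult[of n I a "\<lambda>x. f x - g x"] by (simp add: algebra_simps)
lemma ceq_mem: "is_ideal n I \<Longrightarrow> ceq I f g \<Longrightarrow> g \<in> I \<Longrightarrow> f \<in> I"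
  unfolding ceq_def using ideal_add[of n I "\<lambda>x. f x - g x" g] by simp
lemma ceq_zero: "is_ideal n I \<Longrightarrow> f \<in> I \<Longrightarrow> ceq I f (\<lambda>x. 0)"
  unfolding ceq_def by simp

lemma ideal_gen_ideal:
  assumes "S \<subseteq> Cinf n" shows "is_ideal n (ideal_gen n S)"
  unfolding is_ideal_def
proof (intro conjI ballI)
  show "ideal_gen n S \<subseteq> Cinf n" using assms is_ideal_Cinf unfolding ideal_gen_def by blast
  show "(\<lambda>x. 0) \<in> ideal_gen n S" unfolding ideal_gen_def using ideal_0 by blast
next
  fix f g assume "f \<in> ideal_gen n S" "g \<in> ideal_gen n S"
  then show "(\<lambda>x. f x + g x) \<in> ideal_gen n S" unfolding ideal_gen_def using ideal_add by blast
next
  fix a f assume "a \<in> Cinf n" "f \<in> ideal_gen n S"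
  then show "(\<lambda>x. a x * f x) \<in> ideal_gen n S" unfolding ideal_gen_def using ideal_lmult by blast
qed

lemma ideal_gen_base: "f \<in> S \<Longrightarrow> f \<in> ideal_gen n S"
  unfolding ideal_gen_def by auto

lemma ideal_gen_least: "is_ideal n I \<Longrightarrow> S \<subseteq> I \<Longrightarrow> ideal_gen n S \<subseteq> I"
  unfolding ideal_gen_def by auto

lemma ideal_gen_mono: "S \<subseteq> S' \<Longrightarrow> S' \<subseteq> Cinf n \<Longrightarrow> ideal_gen n S \<subseteq> ideal_gen n S'"
  by (meson ideal_gen_base ideal_gen_ideal ideal_gen_least subset_iff)

lemma subst_ideal:
  assumes I': "is_ideal q I'"
    and sm: "\<And>F. F \<in> Cinf p \<Longrightarrow> (\<lambda>z. F (\<sigma> z)) \<in> Cinf q"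
    and gens: "\<And>F. F \<in> S \<Longrightarrow> (\<lambda>z. F (\<sigma> z)) \<in> I'"
    and F: "F \<in> ideal_gen p S" and SC: "S \<subseteq> Cinf p"
  shows "(\<lambda>z. F (\<sigma> z)) \<in> I'"
proof -
  let ?P = "{F \<in> Cinf p. (\<lambda>z. F (\<sigma> z)) \<in> I'}"
  have "is_ideal p ?P"
    unfolding is_ideal_def
  proof (intro conjI ballI)
    show "?P \<subseteq> Cinf p" by auto
    show "(\<lambda>x. 0) \<in> ?P" using ideal_0[OF I'] by auto
  next
    fix f g assume "f \<in> ?P" "g \<in> ?P"
    then show "(\<lambda>x. f x + g x) \<in> ?P" using ideal_add[OF I'] by auto
  next
    fix a f assume "a \<in> Cinf p" "f \<in> ?P"
    then show "(\<lambda>x. a x * f x) \<in> ?P" using ideal_lmult[OF I' sm] by auto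
  qed
  moreover have "S \<subseteq> ?P" using gens SC by blast
  ultimately have "ideal_gen p S \<subseteq> ?P" by (rule ideal_gen_least)
  with F show ?thesis by auto
qed

text \<open>By Hadamard's lemma, \<open>G(P) - G(Q)\<close> lies in the ideal generated by the \<open>P\<^sub>j - Q\<^sub>j\<close>;
  so the \<open>C\<^sup>\<infinity>\<close>-operations are well defined on quotients.\<close>
lemma ceq_cinf_op:
  assumes I: "is_ideal n I" and G: "G \<in> Cinf m"
    and P: "\<And>j. j < m \<Longrightarrow> P j \<in> Cinf n" and Q: "\<And>j. j < m \<Longrightarrow> Q j \<in> Cinf n"
    and PQ: "\<And>j. j < m \<Longrightarrow> ceq I (P j) (Q j)"
  shows "ceq I (cinf_op m G P) (cinf_op m G Q)"
proof -
  define R where "R l = (if l < m then P l else Q (l - m))" for l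
  have Rs: "R l \<in> Cinf n" if "l < 2*m" for l using P Q that unfolding R_def by auto
  have eq: "cinf_op m G P x - cinf_op m G Q x =
      (\<Sum>j<m. cinf_op (2*m) (hadamard_fun m G j) R x * (P j x - Q j x))" for x
  proof -
    let ?u = "\<lambda>j. if j < m then P j x else 0" and ?v = "\<lambda>j. if j < m then Q j x else 0"
    have "G (trunc m ?u) - G (trunc m ?v) = (\<Sum>j<m. hadamard_fun m G j (\<lambda>l. if l < m then ?u l else if l < 2*m then ?v (l - m) else 0) * (?u j - ?v j))"
      by (rule hadamard_identity_fun) (use G in \<open>simp add: Cinf_def\<close>)
    moreover have "trunc m ?u = ?u" "trunc m ?v = ?v" by (auto simp: trunc_def)
    moreover have "(\<lambda>l. if l < m then ?u l else if l < 2*m then ?v (l - m) else 0) = (\<lambda>j. if j < 2*m then R j x else 0)"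
      by (auto simp: R_def fun_eq_iff)
    ultimately show ?thesis unfolding cinf_op_def by simp
  qed
  have "(\<lambda>x. \<Sum>j<m. cinf_op (2*m) (hadamard_fun m G j) R x * (P j x - Q j x)) \<in> I"
  proof (rule ideal_sum[OF I])
    fix j assume "j \<in> {..<m}"
    then have j: "j < m" by simp
    have "cinf_op (2*m) (hadamard_fun m G j) R \<in> Cinf n"
      using smooth_hadamard_fun[of m G j] G j Rs by (auto simp: Cinf_def intro!: smooth_cinf_op)
    moreover have "(\<lambda>x. P j x - Q j x) \<in> I" using PQ[OF j] by (simp add: ceq_def)
    ultimately show "(\<lambda>x. cinf_op (2*m) (hadamard_fun m G j) R x * (P j x - Q j x)) \<in> I"
      by (rule ideal_lmult[OF I])
  qed
  then show ?thesis unfolding ceq_def using eq by simp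
qed

lemma sum_split_add: "(\<Sum>j<n+k. f j) = (\<Sum>j<n. f j) + (\<Sum>l<k. f (n + l))" for f :: "nat \<Rightarrow> real"
  by (induction k) simp_all

lemma shift_fun_Cinf: "g \<in> Cinf k \<Longrightarrow> shift_fun n g \<in> Cinf (n + k)"
proof -
  assume g: "g \<in> Cinf k"
  have "shift_fun n g = cinf_op k g (\<lambda>j z. z (n + j))"
    unfolding shift_fun_def cinf_op_def by (rule ext) (rule Cinf_dep[OF g])
  moreover have "cinf_op k g (\<lambda>j z. z (n + j)) \<in> Cinf (n + k)"
    by (rule Cinf_op[OF g]) auto
  ultimately show ?thesis by simp
qed

lemma index_lt_mult: "j < m \<Longrightarrow> i < d \<Longrightarrow> j * d + i < m * (d::nat)"
proof -
  assume "j < m" "i < d"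
  then have "j * d + i < Suc j * d" by simp
  also have "\<dots> \<le> m * d" using \<open>j < m\<close> by (intro mult_le_mono1) simp
  finally show ?thesis .
qed

lemma index_div_lt: "q < m * d \<Longrightarrow> q div d < (m::nat)"
  by (simp add: less_mult_imp_div_less)

lemma index_mod_lt: "q < m * d \<Longrightarrow> q mod d < (d::nat)"
  by (cases "d = 0") auto

lemma alg_hom_Cinf: "alg_hom n I m' J' h \<Longrightarrow> f \<in> Cinf n \<Longrightarrow> h f \<in> Cinf m'"
  unfolding alg_hom_def by blast
lemma alg_hom_ceq: "alg_hom n I m' J' h \<Longrightarrow> f \<in> Cinf n \<Longrightarrow> g \<in> Cinf n \<Longrightarrow> ceq I f g \<Longrightarrow> ceq J' (h f) (h g)"
  unfolding alg_hom_def by blast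
lemma alg_hom_op: "alg_hom n I m' J' h \<Longrightarrow> G \<in> Cinf k' \<Longrightarrow> (\<forall>j<k'. fs j \<in> Cinf n) \<Longrightarrow>
    ceq J' (h (cinf_op k' G fs)) (cinf_op k' G (\<lambda>j. h (fs j)))"
  unfolding alg_hom_def by blast

lemma alg_hom_mem:
  assumes I: "is_ideal n I" and J': "is_ideal m' J'" and h: "alg_hom n I m' J' h" and f: "f \<in> I"
  shows "h f \<in> J'"
proof -
  have "ceq J' (h (cinf_op 0 (\<lambda>w. 0) (\<lambda>j x. 0))) (cinf_op 0 (\<lambda>w. 0) (\<lambda>j. h (\<lambda>x. 0)))"
    by (rule alg_hom_op[OF h]) auto
  moreover have "cinf_op 0 (\<lambda>w. 0) fs = (\<lambda>x. 0)" for fs by (simp add: cinf_op_def)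
  ultimately have "ceq J' (h (\<lambda>x. 0)) (\<lambda>x. 0)" by simp
  then have h0: "h (\<lambda>x. 0) \<in> J'" by (simp add: ceq_def)
  have "ceq J' (h f) (h (\<lambda>x. 0))"
    by (rule alg_hom_ceq[OF h ideal_sub[OF I f] Cinf_const ceq_zero[OF I f]])
  then show ?thesis using ceq_mem[OF J' _ h0] by blast
qed

lemma ceq_mono: "ceq I f g \<Longrightarrow> I \<subseteq> I' \<Longrightarrow> ceq I' f g"
  unfolding ceq_def by blast

lemma alg_hom_coords:
  assumes h: "alg_hom n I m' J' h" and f: "f \<in> Cinf n"
  shows "ceq J' (h f) (cinf_op n f (\<lambda>q. h (\<lambda>x. x q)))"
proof -
  have "ceq J' (h (cinf_op n f (\<lambda>q x. x q))) (cinf_op n f (\<lambda>q. h (\<lambda>x. x q)))"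
    by (rule alg_hom_op[OF h f]) auto
  then show ?thesis using cinf_op_coord[OF f] by simp
qed

section \<open>Bases of local Artinian algebras\<close>

definition spans_mod :: "nat \<Rightarrow> fn set \<Rightarrow> fn set \<Rightarrow> bool" where
  "spans_mod k J B \<longleftrightarrow> B \<subseteq> Cinf k \<and> (\<forall>f\<in>Cinf k. \<exists>c. ceq J f (\<lambda>x. \<Sum>b\<in>B. c b * b x))"

lemma spans_mod_remove:
  assumes J: "is_ideal k J" and B: "finite B" "spans_mod k J B"
    and rel: "(\<lambda>x. \<Sum>b\<in>B. c b * b x) \<in> J" and b0: "b0 \<in> B" "c b0 \<noteq> 0"
  shows "spans_mod k J (B - {b0})"
  unfolding spans_mod_def
proof (intro conjI ballI)
  show "B - {b0} \<subseteq> Cinf k" using B(2) by (auto simp: spans_mod_def)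
next
  fix f assume "f \<in> Cinf k"
  then obtain c' where c': "(\<lambda>x. f x - (\<Sum>b\<in>B. c' b * b x)) \<in> J"
    using B(2) by (auto simp: spans_mod_def ceq_def)
  define r where "r = c' b0 / c b0"
  define c'' where "c'' b = c' b - r * c b" for b
  have "c'' b0 = 0" using b0(2) by (simp add: c''_def r_def)
  then have remove: "(\<Sum>b\<in>B. c'' b * b x) = (\<Sum>b\<in>B - {b0}. c'' b * b x)" for x
    using B(1) b0(1) by (simp add: sum.remove)
  have "(\<lambda>x. f x - (\<Sum>b\<in>B. c'' b * b x)) =
      (\<lambda>x. (f x - (\<Sum>b\<in>B. c' b * b x)) + r * (\<Sum>b\<in>B. c b * b x))"
    by (simp add: fun_eq_iff c''_def algebra_simps sum_subtractf sum_distrib_left)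
  with ideal_add[OF J c' ideal_scale[OF J rel, of r]]
  have "ceq J f (\<lambda>x. \<Sum>b\<in>B. c'' b * b x)" by (simp add: ceq_def)
  then show "\<exists>c. ceq J f (\<lambda>x. \<Sum>b\<in>B - {b0}. c b * b x)" unfolding remove by blast
qed

lemma minimal_spanning_set_independent:
  assumes J: "is_ideal k J" and B: "finite B" "spans_mod k J B"
    and min: "\<And>B'. finite B' \<Longrightarrow> spans_mod k J B' \<Longrightarrow> card B \<le> card B'"
    and rel: "(\<lambda>x. \<Sum>b\<in>B. c b * b x) \<in> J" and b0: "b0 \<in> B"
  shows "c b0 = 0"
proof (rule ccontr)
  assume "c b0 \<noteq> 0"
  with spans_mod_remove[OF J B rel b0] have "card B \<le> card (B - {b0})" using B(1) min by blast
  with card_Diff1_less[OF B(1) b0] show False by simp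
qed

lemma basis_mod_exists:
  assumes J: "is_ideal k J" and B: "finite B" "spans_mod k J B"
  obtains d :: nat and e where "\<And>i. i < d \<Longrightarrow> e i \<in> Cinf k"
    and "\<And>f. f \<in> Cinf k \<Longrightarrow> \<exists>c. ceq J f (\<lambda>y. \<Sum>i<d. c i * e i y)"
    and "\<And>c i. (\<lambda>y. \<Sum>i<d. c i * e i y) \<in> J \<Longrightarrow> i < d \<Longrightarrow> c i = 0"
proof -
  obtain B0 where B0: "finite B0" "spans_mod k J B0"
    and min: "\<And>B'. finite B' \<Longrightarrow> spans_mod k J B' \<Longrightarrow> card B0 \<le> card B'"
    using ex_has_least_nat[of "\<lambda>B. finite B \<and> spans_mod k J B" B card] B by blast
  obtain e where e: "bij_betw e {..<card B0} B0"
    using ex_bij_betw_nat_finite[OF B0(1)] by (auto simp: atLeast0LessThan)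
  have reindex: "(\<Sum>i<card B0. c (e i) * e i y) = (\<Sum>b\<in>B0. c b * b y)" for c y
    by (rule sum.reindex_bij_betw[OF e])
  show thesis
  proof
    show "e i \<in> Cinf k" if "i < card B0" for i
      using bij_betw_apply[OF e] that B0(2) by (auto simp: spans_mod_def)
  next
    fix f assume "f \<in> Cinf k"
    then obtain c where "ceq J f (\<lambda>y. \<Sum>b\<in>B0. c b * b y)" using B0(2) by (auto simp: spans_mod_def)
    then show "\<exists>c. ceq J f (\<lambda>y. \<Sum>i<card B0. c i * e i y)"
      by (intro exI[of _ "c \<circ> e"]) (simp add: reindex)
  next
    fix c i assume rel: "(\<lambda>y. \<Sum>i<card B0. c i * e i y) \<in> J" and i: "i < card B0"
    define c' where "c' = c \<circ> inv_into {..<card B0} e"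
    have c'e: "c' (e j) = c j" if "j < card B0" for j
      using bij_betw_inv_into_left[OF e] that by (simp add: c'_def)
    have "(\<lambda>y. \<Sum>b\<in>B0. c' b * b y) \<in> J"
      using rel by (simp add: reindex[symmetric] c'e)
    from minimal_spanning_set_independent[OF J B0 min this] bij_betw_apply[OF e] i
    have "c' (e i) = 0" by blast
    with c'e[OF i] show "c i = 0" by simp
  qed
qed

text \<open>A presentation of the local Artinian algebra \<open>W = C\<^sup>\<infinity>(\<real>\<^sup>k)/J\<close>: an \<open>\<real>\<close>-basis \<open>e\<^sub>0, \<dots>, e\<^sub>d\<^sub>-\<^sub>1\<close>
  of \<open>W\<close>, its maximal ideal \<open>M\<close>, nilpotent of order \<open>N\<close> modulo \<open>J\<close>, and the point \<open>a\<close> of \<open>\<real>\<^sup>k\<close>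
  at which \<open>M\<close> is concentrated.\<close>
locale weil_presentation =
  fixes k :: nat and J :: "fn set" and d :: nat and e :: "nat \<Rightarrow> fn" and M :: "fn set"
    and N :: nat and a :: "nat \<Rightarrow> real"
  assumes J: "is_ideal k J"
    and e_Cinf: "\<And>i. i < d \<Longrightarrow> e i \<in> Cinf k"
    and span: "\<And>f. f \<in> Cinf k \<Longrightarrow> \<exists>c. ceq J f (\<lambda>y. \<Sum>i<d. c i * e i y)"
    and indep: "\<And>c i. (\<lambda>y. \<Sum>i<d. c i * e i y) \<in> J \<Longrightarrow> i < d \<Longrightarrow> c i = 0"
    and M: "is_ideal k M"
    and M_pow_N: "\<And>fs. (\<And>j. j < N \<Longrightarrow> fs j \<in> M) \<Longrightarrow> (\<lambda>x. \<Prod>j<N. fs j x) \<in> J"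
    and coord_minus_point_M: "\<And>l. l < k \<Longrightarrow> (\<lambda>y. y l - a l) \<in> M"

lemma weil_presentation_exists:
  assumes "local_artinian k J"
  obtains d :: nat and e M N a where "weil_presentation k J d e M N a"
proof -
  from assms obtain B M N where J: "is_ideal k J" and B: "finite B" "spans_mod k J B"
    and M: "is_ideal k M" and res: "\<forall>f\<in>Cinf k. \<exists>c::real. ceq M f (\<lambda>x. c)"
    and M_pow_N: "\<forall>fs :: nat \<Rightarrow> fn. (\<forall>j<N. fs j \<in> M) \<longrightarrow> (\<lambda>x. \<Prod>j<N. fs j x) \<in> J"
    unfolding local_artinian_def spans_mod_def by blast
  obtain d :: nat and e where basis: "\<And>i. i < d \<Longrightarrow> e i \<in> Cinf k"
    "\<And>f. f \<in> Cinf k \<Longrightarrow> \<exists>c. ceq J f (\<lambda>y. \<Sum>i<d. c i * e i y)"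
    "\<And>c i. (\<lambda>y. \<Sum>i<d. c i * e i y) \<in> J \<Longrightarrow> i < d \<Longrightarrow> c i = 0"
    by (rule basis_mod_exists[OF J B]) iprover
  define a where "a l = (SOME c. ceq M (\<lambda>y. y l) (\<lambda>y. c))" for l
  have coord_minus_point_M: "(\<lambda>y. y l - a l) \<in> M" if "l < k" for l
  proof -
    have "\<exists>c. ceq M (\<lambda>y. y l) (\<lambda>y. c)" using res Cinf_coord[OF that] by blast
    then have "ceq M (\<lambda>y. y l) (\<lambda>y. a l)" unfolding a_def by (rule someI_ex)
    then show ?thesis by (simp add: ceq_def)
  qed
  show thesis
  proof (rule that[of d e M N a], unfold_locales)
    show "is_ideal k J" by (fact J)
    show "is_ideal k M" by (fact M)
    show "\<And>l. l < k \<Longrightarrow> (\<lambda>y. y l - a l) \<in> M" by (fact coord_minus_point_M)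
    show "\<And>fs. (\<And>j. j < N \<Longrightarrow> fs j \<in> M) \<Longrightarrow> (\<lambda>x. \<Prod>j<N. fs j x) \<in> J"
      using M_pow_N by blast
  qed (fact basis)+
qed

context weil_presentation
begin

definition wcoeff :: "fn \<Rightarrow> nat \<Rightarrow> real" where
  "wcoeff f = (SOME c. ceq J f (\<lambda>y. \<Sum>i<d. c i * e i y))"

lemma wcoeff_spec: assumes "f \<in> Cinf k" shows "ceq J f (\<lambda>y. \<Sum>i<d. wcoeff f i * e i y)"
  unfolding wcoeff_def using someI_ex[OF span[OF assms]] .

lemma Cinf_wcomb: "(\<lambda>y. \<Sum>i<d. c i * e i y) \<in> Cinf k"
  using e_Cinf by (intro Cinf_sum Cinf_mult Cinf_const) auto

lemma wcoeff_unique: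
  assumes f: "f \<in> Cinf k" and c: "ceq J f (\<lambda>y. \<Sum>i<d. c i * e i y)" and i: "i < d"
  shows "wcoeff f i = c i"
proof -
  have "ceq J (\<lambda>y. \<Sum>i<d. wcoeff f i * e i y) (\<lambda>y. \<Sum>i<d. c i * e i y)"
    by (rule ceq_trans[OF J ceq_sym[OF J wcoeff_spec[OF f]] c])
  then have "(\<lambda>y. (\<Sum>i<d. wcoeff f i * e i y) - (\<Sum>i<d. c i * e i y)) \<in> J" by (simp add: ceq_def)
  moreover have "(\<lambda>y. (\<Sum>i<d. wcoeff f i * e i y) - (\<Sum>i<d. c i * e i y)) = (\<lambda>y. \<Sum>i<d. (wcoeff f i - c i) * e i y)"
    by (simp add: sum_subtractf left_diff_distrib)
  ultimately have "(\<lambda>y. \<Sum>i<d. (wcoeff f i - c i) * e i y) \<in> J" by simp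
  from indep[OF this i] show ?thesis by simp
qed

lemma wcoeff_add:
  assumes "f \<in> Cinf k" "g \<in> Cinf k" "i < d"
  shows "wcoeff (\<lambda>y. f y + g y) i = wcoeff f i + wcoeff g i"
proof -
  have "ceq J (\<lambda>y. f y + g y) (\<lambda>y. (\<Sum>i<d. wcoeff f i * e i y) + (\<Sum>i<d. wcoeff g i * e i y))"
    by (rule ceq_add[OF J wcoeff_spec wcoeff_spec]) (use assms in auto)
  moreover have "(\<lambda>y. (\<Sum>i<d. wcoeff f i * e i y) + (\<Sum>i<d. wcoeff g i * e i y)) = (\<lambda>y. \<Sum>i<d. (wcoeff f i + wcoeff g i) * e i y)"
    by (simp add: sum.distrib distrib_right)
  ultimately have "ceq J (\<lambda>y. f y + g y) (\<lambda>y. \<Sum>i<d. (wcoeff f i + wcoeff g i) * e i y)" by simp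
  from wcoeff_unique[OF _ this assms(3)] show ?thesis using assms by auto
qed

lemma wcoeff_scale:
  assumes "f \<in> Cinf k" "i < d"
  shows "wcoeff (\<lambda>y. r * f y) i = r * wcoeff f i"
proof -
  have "ceq J (\<lambda>y. r * f y) (\<lambda>y. r * (\<Sum>i<d. wcoeff f i * e i y))"
    by (rule ceq_lmult[OF J Cinf_const wcoeff_spec[OF assms(1)]])
  moreover have "(\<lambda>y. r * (\<Sum>i<d. wcoeff f i * e i y)) = (\<lambda>y. \<Sum>i<d. (r * wcoeff f i) * e i y)"
    by (simp add: sum_distrib_left mult.assoc)
  ultimately have "ceq J (\<lambda>y. r * f y) (\<lambda>y. \<Sum>i<d. (r * wcoeff f i) * e i y)" by simp
  from wcoeff_unique[OF Cinf_mult[OF Cinf_const assms(1)] this assms(2)] show ?thesis by simp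
qed

lemma wcoeff_diff:
  assumes f: "f \<in> Cinf k" and g: "g \<in> Cinf k" and i: "i < d"
  shows "wcoeff (\<lambda>y. f y - g y) i = wcoeff f i - wcoeff g i"
proof -
  have "(\<lambda>y. (f y - (\<Sum>i<d. wcoeff f i * e i y)) - (g y - (\<Sum>i<d. wcoeff g i * e i y))) \<in> J"
    using ideal_diff[OF J wcoeff_spec[OF f, unfolded ceq_def] wcoeff_spec[OF g, unfolded ceq_def]] .
  moreover have "(\<lambda>y. (f y - (\<Sum>i<d. wcoeff f i * e i y)) - (g y - (\<Sum>i<d. wcoeff g i * e i y))) =
      (\<lambda>y. (f y - g y) - (\<Sum>i<d. (wcoeff f i - wcoeff g i) * e i y))"
  proof (rule ext)
    fix y
    have "(\<Sum>i<d. (wcoeff f i - wcoeff g i) * e i y) = (\<Sum>i<d. wcoeff f i * e i y) - (\<Sum>i<d. wcoeff g i * e i y)"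
      by (simp add: sum_subtractf left_diff_distrib)
    then show "(f y - (\<Sum>i<d. wcoeff f i * e i y)) - (g y - (\<Sum>i<d. wcoeff g i * e i y)) =
      (f y - g y) - (\<Sum>i<d. (wcoeff f i - wcoeff g i) * e i y)" by linarith
  qed
  ultimately have "ceq J (\<lambda>y. f y - g y) (\<lambda>y. \<Sum>i<d. (wcoeff f i - wcoeff g i) * e i y)"
    unfolding ceq_def by simp
  from wcoeff_unique[OF Cinf_diff[OF f g] this i] show ?thesis .
qed

lemma wcoeff_ideal:
  assumes "f \<in> J" "i < d"
  shows "wcoeff f i = 0"
proof -
  have "ceq J f (\<lambda>y. \<Sum>i<d. 0 * e i y)" using ceq_zero[OF J assms(1)] by simp
  from wcoeff_unique[OF ideal_sub[OF J assms(1)] this assms(2)] show ?thesis .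
qed

lemma wcoeff_ceq:
  assumes "f \<in> Cinf k" "g \<in> Cinf k" "ceq J f g" "i < d"
  shows "wcoeff f i = wcoeff g i"
  using wcoeff_unique[OF assms(1) ceq_trans[OF J assms(3) wcoeff_spec[OF assms(2)]] assms(4)] .

lemma wcoeff_wcomb:
  assumes "i < d"
  shows "wcoeff (\<lambda>y. \<Sum>i<d. c i * e i y) i = c i"
  by (rule wcoeff_unique[OF Cinf_wcomb ceq_refl[OF J] assms])

lemma wcoeff_sum:
  assumes "finite A" "\<And>b. b \<in> A \<Longrightarrow> F b \<in> Cinf k" "i < d"
  shows "wcoeff (\<lambda>y. \<Sum>b\<in>A. F b y) i = (\<Sum>b\<in>A. wcoeff (F b) i)"
  using assms
proof (induction A rule: finite_induct)
  case empty
  then show ?case using wcoeff_ideal[OF ideal_0[OF J] assms(3)] by simp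
next
  case (insert b A)
  have "wcoeff (\<lambda>y. \<Sum>b\<in>insert b A. F b y) i = wcoeff (\<lambda>y. F b y + (\<Sum>b\<in>A. F b y)) i"
    using insert.hyps by simp
  also have "\<dots> = wcoeff (F b) i + wcoeff (\<lambda>y. \<Sum>b\<in>A. F b y) i"
    using wcoeff_add[of "F b" "\<lambda>y. \<Sum>b\<in>A. F b y" i] insert.prems assms(3) by (auto intro!: Cinf_sum)
  also have "\<dots> = (\<Sum>b\<in>insert b A. wcoeff (F b) i)" using insert by simp
  finally show ?case .
qed

section \<open>Coordinates on \<open>C\<^sup>\<infinity>(\<real>\<^sup>n) \<otimes> W\<close>\<close>

text \<open>\<open>fibre n x F\<close> is \<open>y \<mapsto> F(x, y)\<close> on \<open>\<real>\<^sup>k\<close>; the \<open>W\<close>-coordinates of its class,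
  \<open>fibre_coeff n i F\<close> below, are the coordinates of \<open>F\<close> in \<open>C\<^sup>\<infinity>(\<real>\<^sup>n) \<otimes> W \<cong> C\<^sup>\<infinity>(\<real>\<^sup>n)\<^sup>d\<close>.\<close>
definition fibre :: "nat \<Rightarrow> (nat \<Rightarrow> real) \<Rightarrow> fn \<Rightarrow> fn" where
  "fibre n x F = (\<lambda>y. F (\<lambda>l. if l < n then x l else if l < n + k then y (l - n) else 0))"

lemma fibre_Cinf: assumes F: "F \<in> Cinf (n + k)" shows "fibre n x F \<in> Cinf k"
proof -
  have "fibre n x F = cinf_op (n + k) F (\<lambda>l. if l < n then (\<lambda>y. x l) else (\<lambda>y. y (l - n)))"
    unfolding fibre_def cinf_op_def by (rule ext) (rule arg_cong[where f=F], auto)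
  moreover have "cinf_op (n + k) F (\<lambda>l. if l < n then (\<lambda>y. x l) else (\<lambda>y. y (l - n))) \<in> Cinf k"
    by (rule Cinf_op[OF F]) auto
  ultimately show ?thesis by simp
qed

lemma fibre_shift: assumes g: "g \<in> Cinf k" shows "fibre n x (shift_fun n g) = g"
proof
  fix y
  have "(\<lambda>j. (if n + j < n then x (n + j) else if n + j < n + k then y (n + j - n) else 0)) = (\<lambda>j. if j < k then y j else 0)"
    by auto
  then show "fibre n x (shift_fun n g) y = g y"
    unfolding fibre_def shift_fun_def using Cinf_dep[OF g, of y] by simp
qed

lemma fibre_lift: assumes C: "C \<in> Cinf n" shows "fibre n x C = (\<lambda>y. C x)"
proof
  fix y
  have "(\<lambda>i. if i < n then (if i < n then x i else if i < n + k then y (i - n) else 0) else 0) = (\<lambda>i. if i < n then x i else 0)"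
    by auto
  then show "fibre n x C y = C x"
    unfolding fibre_def using Cinf_dep[OF C, of x] Cinf_dep[OF C, of "\<lambda>l. if l < n then x l else if l < n + k then y (l - n) else 0"]
    by simp
qed

definition ext_ideal :: "nat \<Rightarrow> fn set" where
  "ext_ideal n = ideal_gen (n + k) {shift_fun n g | g. g \<in> J}"

lemma ext_ideal_gens_Cinf: "{shift_fun n g | g. g \<in> J} \<subseteq> Cinf (n + k)"
  using shift_fun_Cinf ideal_sub[OF J] by blast

lemma is_ideal_ext_ideal: "is_ideal (n + k) (ext_ideal n)"
  unfolding ext_ideal_def by (rule ideal_gen_ideal[OF ext_ideal_gens_Cinf])

lemma ext_ideal_gen: "g \<in> J \<Longrightarrow> shift_fun n g \<in> ext_ideal n"
  unfolding ext_ideal_def by (rule ideal_gen_base) blast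

lemma fibre_ext_ideal: assumes G: "G \<in> ext_ideal n" shows "fibre n x G \<in> J"
proof -
  have "(\<lambda>y. G (\<lambda>l. if l < n then x l else if l < n + k then y (l - n) else 0)) \<in> J"
  proof (rule subst_ideal[OF J _ _ G[unfolded ext_ideal_def] ext_ideal_gens_Cinf])
    fix F assume "F \<in> Cinf (n + k)"
    from fibre_Cinf[OF this, of x] show "(\<lambda>y. F (\<lambda>l. if l < n then x l else if l < n + k then y (l - n) else 0)) \<in> Cinf k"
      unfolding fibre_def .
  next
    fix F assume "F \<in> {shift_fun n g | g. g \<in> J}"
    then obtain g where g: "g \<in> J" and F: "F = shift_fun n g" by blast
    have "fibre n x F = g" unfolding F by (rule fibre_shift[OF ideal_sub[OF J g]])
    then show "(\<lambda>y. F (\<lambda>l. if l < n then x l else if l < n + k then y (l - n) else 0)) \<in> J"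
      using g unfolding fibre_def by simp
  qed
  then show ?thesis unfolding fibre_def .
qed

definition fibre_coeff :: "nat \<Rightarrow> nat \<Rightarrow> fn \<Rightarrow> fn" where
  "fibre_coeff n i F = (\<lambda>x. wcoeff (fibre n x F) i)"

lemma hadamard_at_point:
  assumes G: "G \<in> Cinf (n + k)"
  shows "\<exists>G0 H. G0 \<in> Cinf n \<and> (\<forall>l<k. H l \<in> Cinf (n + k)) \<and>
           (\<forall>z. G z = G0 z + (\<Sum>l<k. H l z * (z (n + l) - a l)))"
proof -
  define v where "v z = (\<lambda>j. if j < n then z j else if j < n + k then a (j - n) else 0)" for z
  define comps0 where "comps0 j = (if j < n then (\<lambda>z::nat\<Rightarrow>real. z j) else (\<lambda>z. a (j - n)))" for j
  define G0 where "G0 = cinf_op (n + k) G comps0"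
  have G0v: "G0 z = G (v z)" for z
    unfolding G0_def cinf_op_def v_def comps0_def by (rule arg_cong[where f=G]) auto
  have G0C: "G0 \<in> Cinf n" unfolding G0_def comps0_def by (rule Cinf_op[OF G]) auto
  define w where "w z = (\<lambda>l. if l < n + k then z l else if l < 2 * (n + k) then v z (l - (n + k)) else 0)" for z
  define compsW where "compsW j = (if j < n + k then (\<lambda>z::nat\<Rightarrow>real. z j) else
     if j - (n + k) < n then (\<lambda>z. z (j - (n + k))) else (\<lambda>z. a (j - (n + k) - n)))" for j
  define H where "H l = cinf_op (2 * (n + k)) (hadamard_fun (n + k) G (n + l)) compsW" for l
  have Hw: "H l z = hadamard_fun (n + k) G (n + l) (w z)" for l z
    unfolding H_def cinf_op_def w_def compsW_def v_def
    by (rule arg_cong[where f="hadamard_fun (n + k) G (n + l)"]) (auto simp: fun_eq_iff)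
  have HC: "\<forall>l<k. H l \<in> Cinf (n + k)"
  proof (intro allI impI)
    fix l assume l: "l < k"
    have "hadamard_fun (n + k) G (n + l) \<in> Cinf (2 * (n + k))"
      using smooth_hadamard_fun[of "n + k" G "n + l"] G l by (simp add: Cinf_def)
    then show "H l \<in> Cinf (n + k)" unfolding H_def compsW_def by (rule Cinf_op) auto
  qed
  have expand: "G z = G0 z + (\<Sum>l<k. H l z * (z (n + l) - a l))" for z
  proof -
    have Gs: "smooth (n + k) G" using G by (simp add: Cinf_def)
    have "G (trunc (n + k) z) - G (trunc (n + k) (v z)) =
        (\<Sum>j<n + k. hadamard_fun (n + k) G j (\<lambda>l. if l < n + k then z l else if l < 2 * (n + k) then v z (l - (n + k)) else 0) * (z j - v z j))"
      by (rule hadamard_identity_fun[OF Gs])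
    moreover have "G (trunc (n + k) z) = G z" using Cinf_dep[OF G, of z] by (simp add: trunc_def)
    moreover have "trunc (n + k) (v z) = v z" by (auto simp: trunc_def v_def)
    moreover have "(\<Sum>j<n + k. hadamard_fun (n + k) G j (w z) * (z j - v z j)) = (\<Sum>l<k. H l z * (z (n + l) - a l))"
    proof -
      have "(\<Sum>j<n + k. hadamard_fun (n + k) G j (w z) * (z j - v z j)) =
          (\<Sum>j<n. hadamard_fun (n + k) G j (w z) * (z j - v z j)) + (\<Sum>l<k. hadamard_fun (n + k) G (n + l) (w z) * (z (n + l) - v z (n + l)))"
        by (rule sum_split_add)
      moreover have "(\<Sum>j<n. hadamard_fun (n + k) G j (w z) * (z j - v z j)) = 0"
        by (rule sum.neutral) (auto simp: v_def)
      moreover have "(\<Sum>l<k. hadamard_fun (n + k) G (n + l) (w z) * (z (n + l) - v z (n + l))) = (\<Sum>l<k. H l z * (z (n + l) - a l))"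
        by (rule sum.cong[OF refl]) (auto simp: v_def Hw)
      ultimately show ?thesis by simp
    qed
    ultimately show ?thesis using G0v unfolding w_def by simp
  qed
  show ?thesis using G0C HC expand by blast
qed

definition wspan :: "nat \<Rightarrow> fn set" where
  "wspan n = {F \<in> Cinf (n + k). \<exists>C. (\<forall>i<d. C i \<in> Cinf n) \<and>
     ceq (ext_ideal n) F (\<lambda>z. \<Sum>i<d. C i z * shift_fun n (e i) z)}"

lemma wspan_ext_ideal:
  assumes "F \<in> ext_ideal n"
  shows "F \<in> wspan n"
proof -
  have "ceq (ext_ideal n) F (\<lambda>z. \<Sum>i<d. 0 * shift_fun n (e i) z)"
    using ceq_zero[OF is_ideal_ext_ideal assms] by simp
  moreover have "F \<in> Cinf (n + k)" by (rule ideal_sub[OF is_ideal_ext_ideal assms])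
  ultimately show ?thesis unfolding wspan_def
    by (intro CollectI conjI exI[of _ "\<lambda>i z. 0"]) auto
qed

lemma wspan_zero: "(\<lambda>z. 0) \<in> wspan n"
  by (rule wspan_ext_ideal[OF ideal_0[OF is_ideal_ext_ideal]])

lemma wspan_add:
  assumes F: "F \<in> wspan n" and G: "G \<in> wspan n"
  shows "(\<lambda>z. F z + G z) \<in> wspan n"
proof -
  obtain C1 where FC: "F \<in> Cinf (n + k)" and C1: "\<forall>i<d. C1 i \<in> Cinf n"
    and c1: "ceq (ext_ideal n) F (\<lambda>z. \<Sum>i<d. C1 i z * shift_fun n (e i) z)"
    using F unfolding wspan_def by blast
  obtain C2 where GC: "G \<in> Cinf (n + k)" and C2: "\<forall>i<d. C2 i \<in> Cinf n"
    and c2: "ceq (ext_ideal n) G (\<lambda>z. \<Sum>i<d. C2 i z * shift_fun n (e i) z)"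
    using G unfolding wspan_def by blast
  have "ceq (ext_ideal n) (\<lambda>z. F z + G z)
      (\<lambda>z. (\<Sum>i<d. C1 i z * shift_fun n (e i) z) + (\<Sum>i<d. C2 i z * shift_fun n (e i) z))"
    by (rule ceq_add[OF is_ideal_ext_ideal c1 c2])
  then have "ceq (ext_ideal n) (\<lambda>z. F z + G z)
      (\<lambda>z. \<Sum>i<d. (C1 i z + C2 i z) * shift_fun n (e i) z)"
    by (simp add: sum.distrib distrib_right)
  moreover have "\<forall>i<d. (\<lambda>z. C1 i z + C2 i z) \<in> Cinf n" using C1 C2 by auto
  moreover have "(\<lambda>z. F z + G z) \<in> Cinf (n + k)" using FC GC by auto
  ultimately show ?thesis unfolding wspan_def
    by (intro CollectI conjI exI[of _ "\<lambda>i z. C1 i z + C2 i z"])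
qed

lemma wspan_sum:
  assumes "finite A" "\<And>b. b \<in> A \<Longrightarrow> F b \<in> wspan n"
  shows "(\<lambda>z. \<Sum>b\<in>A. F b z) \<in> wspan n"
  using assms
proof (induction A rule: finite_induct)
  case empty then show ?case using wspan_zero by simp
next
  case (insert b A)
  then have "(\<lambda>z. F b z + (\<Sum>b\<in>A. F b z)) \<in> wspan n"
    using wspan_add[of "F b" n "\<lambda>z. \<Sum>b\<in>A. F b z"] by simp
  with insert.hyps show ?case by simp
qed

lemma wspan_mult_shift:
  assumes G0: "G0 \<in> Cinf n" and p: "p \<in> Cinf k"
  shows "(\<lambda>z. G0 z * shift_fun n p z) \<in> wspan n"
proof -
  obtain c where "ceq J p (\<lambda>y. \<Sum>i<d. c i * e i y)" using span[OF p] by blast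
  then have "shift_fun n (\<lambda>y. p y - (\<Sum>i<d. c i * e i y)) \<in> ext_ideal n"
    unfolding ceq_def by (rule ext_ideal_gen)
  then have "ceq (ext_ideal n) (shift_fun n p) (\<lambda>z. \<Sum>i<d. c i * shift_fun n (e i) z)"
    unfolding ceq_def shift_fun_def .
  from ceq_lmult[OF is_ideal_ext_ideal Cinf_mono[OF G0] this]
  have "ceq (ext_ideal n) (\<lambda>z. G0 z * shift_fun n p z) (\<lambda>z. \<Sum>i<d. (c i * G0 z) * shift_fun n (e i) z)"
    by (simp add: sum_distrib_left mult.assoc mult.left_commute)
  moreover have "(\<lambda>z. G0 z * shift_fun n p z) \<in> Cinf (n + k)"
    using Cinf_mono[OF G0] shift_fun_Cinf[OF p] by (rule Cinf_mult) simp
  moreover have "\<forall>i<d. (\<lambda>z. c i * G0 z) \<in> Cinf n" using G0 by auto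
  ultimately show ?thesis unfolding wspan_def
    by (intro CollectI conjI exI[of _ "\<lambda>i z. c i * G0 z"])
qed

text \<open>Expanding \<open>G(x, y)\<close> around \<open>y = a\<close> produces a term \<open>G(x, a) \<Pi>\<^sub>j f\<^sub>j(y)\<close>, which is spanned by
  the \<open>e\<^sub>i(y)\<close>, plus terms with one more factor \<open>y\<^sub>l - a\<^sub>l \<in> M\<close>; after \<open>N\<close> factors the
  product lies in \<open>J\<close>.\<close>
lemma wspan_prod_mult:
  assumes "r \<le> N" "\<And>j. j < r \<Longrightarrow> fs j \<in> M" "G \<in> Cinf (n + k)"
  shows "(\<lambda>z. (\<Prod>j<r. fs j (\<lambda>l. z (n + l))) * G z) \<in> wspan n"
  using assms
proof (induction r arbitrary: fs G rule: inc_induct)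
  case base
  then have "(\<lambda>y. \<Prod>j<N. fs j y) \<in> J" by (intro M_pow_N)
  then have "(\<lambda>z. shift_fun n (\<lambda>y. \<Prod>j<N. fs j y) z * G z) \<in> ext_ideal n"
    by (intro ideal_rmult[OF is_ideal_ext_ideal base.prems(2)] ext_ideal_gen)
  then show ?case unfolding shift_fun_def by (rule wspan_ext_ideal)
next
  case (step r)
  obtain G0 H where G0: "G0 \<in> Cinf n" and HC: "\<forall>l<k. H l \<in> Cinf (n + k)"
    and G: "\<forall>z. G z = G0 z + (\<Sum>l<k. H l z * (z (n + l) - a l))"
    using hadamard_at_point[OF step.prems(2)] by blast
  let ?P = "\<lambda>z. \<Prod>j<r. fs j (\<lambda>l. z (n + l))"
  let ?fs = "\<lambda>l. fs(r := (\<lambda>y. y l - a l))"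
  have "(\<lambda>z. G0 z * shift_fun n (\<lambda>y. \<Prod>j<r. fs j y) z) \<in> wspan n"
    using step.prems(1) ideal_sub[OF M] by (intro wspan_mult_shift G0 Cinf_prod) auto
  moreover have "(\<lambda>z. \<Sum>l<k. (\<Prod>j<Suc r. ?fs l j (\<lambda>l. z (n + l))) * H l z) \<in> wspan n"
  proof (rule wspan_sum)
    fix l assume "l \<in> {..<k}"
    then show "(\<lambda>z. (\<Prod>j<Suc r. ?fs l j (\<lambda>l. z (n + l))) * H l z) \<in> wspan n"
      using step.prems(1) coord_minus_point_M HC by (intro step.IH) (auto simp: less_Suc_eq)
  qed simp
  ultimately have "(\<lambda>z. G0 z * shift_fun n (\<lambda>y. \<Prod>j<r. fs j y) z +
      (\<Sum>l<k. (\<Prod>j<Suc r. ?fs l j (\<lambda>l. z (n + l))) * H l z)) \<in> wspan n"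
    by (rule wspan_add)
  moreover have "(\<Prod>j<Suc r. ?fs l j (\<lambda>l. z (n + l))) = ?P z * (z (n + l) - a l)" for l z
  proof -
    have "(\<Prod>j<r. ?fs l j (\<lambda>l. z (n + l))) = ?P z" by (rule prod.cong) auto
    then show ?thesis by (simp add: prod.lessThan_Suc)
  qed
  ultimately have "(\<lambda>z. G0 z * ?P z + (\<Sum>l<k. ?P z * (z (n + l) - a l) * H l z)) \<in> wspan n"
    by (simp add: shift_fun_def)
  moreover have "?P z * G z = G0 z * ?P z + (\<Sum>l<k. ?P z * (z (n + l) - a l) * H l z)" for z
  proof -
    have "?P z * G z = ?P z * G0 z + (\<Sum>l<k. ?P z * (H l z * (z (n + l) - a l)))"
      using G by (simp add: distrib_left sum_distrib_left)
    also have "\<dots> = G0 z * ?P z + (\<Sum>l<k. ?P z * (z (n + l) - a l) * H l z)"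
      by (simp add: mult_ac)
    finally show ?thesis .
  qed
  ultimately show ?case by simp
qed

lemma wspan_all:
  assumes "G \<in> Cinf (n + k)"
  shows "G \<in> wspan n"
  using wspan_prod_mult[of 0 _ G] assms by simp

lemma fibre_wcomb:
  assumes C: "\<forall>i<d. C i \<in> Cinf n"
  shows "fibre n x (\<lambda>z. \<Sum>i<d. C i z * shift_fun n (e i) z) = (\<lambda>y. \<Sum>i<d. C i x * e i y)"
proof
  fix y
  have "fibre n x (\<lambda>z. \<Sum>i<d. C i z * shift_fun n (e i) z) y = (\<Sum>i<d. fibre n x (C i) y * fibre n x (shift_fun n (e i)) y)"
    by (simp add: fibre_def)
  also have "\<dots> = (\<Sum>i<d. C i x * e i y)"
    by (rule sum.cong[OF refl]) (use C e_Cinf in \<open>simp add: fibre_lift fibre_shift\<close>)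
  finally show "fibre n x (\<lambda>z. \<Sum>i<d. C i z * shift_fun n (e i) z) y = (\<Sum>i<d. C i x * e i y)" .
qed

lemma fibre_coeff_wcomb:
  assumes C: "\<forall>i<d. C i \<in> Cinf n" and i: "i < d"
  shows "fibre_coeff n i (\<lambda>z. \<Sum>i<d. C i z * shift_fun n (e i) z) = C i"
  unfolding fibre_coeff_def fibre_wcomb[OF C] using wcoeff_wcomb[OF i] by simp

lemma fibre_diff: "fibre n x (\<lambda>z. F z - G z) = (\<lambda>y. fibre n x F y - fibre n x G y)"
  by (simp add: fibre_def)
lemma fibre_add: "fibre n x (\<lambda>z. F z + G z) = (\<lambda>y. fibre n x F y + fibre n x G y)"
  by (simp add: fibre_def)
lemma fibre_mult: "fibre n x (\<lambda>z. F z * G z) = (\<lambda>y. fibre n x F y * fibre n x G y)"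
  by (simp add: fibre_def)

lemma fibre_coeff_expansion:
  assumes F: "F \<in> Cinf (n + k)"
  shows "(\<forall>i<d. fibre_coeff n i F \<in> Cinf n) \<and> ceq (ext_ideal n) F (\<lambda>z. \<Sum>i<d. fibre_coeff n i F z * shift_fun n (e i) z)"
proof -
  obtain C where CC: "\<forall>i<d. C i \<in> Cinf n" and c: "ceq (ext_ideal n) F (\<lambda>z. \<Sum>i<d. C i z * shift_fun n (e i) z)"
    using wspan_all[OF F] unfolding wspan_def by blast
  have SC: "(\<lambda>z. \<Sum>i<d. C i z * shift_fun n (e i) z) \<in> Cinf (n + k)"
    using CC e_Cinf by (intro Cinf_sum Cinf_mult) (auto intro: Cinf_mono shift_fun_Cinf)
  have eq: "fibre_coeff n i F = C i" if i: "i < d" for i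
  proof
    fix x
    have "fibre n x (\<lambda>z. F z - (\<Sum>i<d. C i z * shift_fun n (e i) z)) \<in> J"
      using c unfolding ceq_def by (rule fibre_ext_ideal)
    then have "ceq J (fibre n x F) (fibre n x (\<lambda>z. \<Sum>i<d. C i z * shift_fun n (e i) z))"
      unfolding ceq_def fibre_diff .
    then have "wcoeff (fibre n x F) i = wcoeff (fibre n x (\<lambda>z. \<Sum>i<d. C i z * shift_fun n (e i) z)) i"
      by (rule wcoeff_ceq[OF fibre_Cinf[OF F] fibre_Cinf[OF SC] _ i])
    also have "\<dots> = C i x" unfolding fibre_wcomb[OF CC] by (rule wcoeff_wcomb[OF i])
    finally show "fibre_coeff n i F x = C i x" unfolding fibre_coeff_def .
  qed
  have "(\<lambda>z. \<Sum>i<d. fibre_coeff n i F z * shift_fun n (e i) z) = (\<lambda>z. \<Sum>i<d. C i z * shift_fun n (e i) z)"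
    by (rule ext, rule sum.cong[OF refl]) (simp add: eq)
  then show ?thesis using CC c eq by simp
qed

lemma fibre_coeff_Cinf: "F \<in> Cinf (n + k) \<Longrightarrow> i < d \<Longrightarrow> fibre_coeff n i F \<in> Cinf n"
  using fibre_coeff_expansion by blast

lemma fibre_coeff_ceq: "F \<in> Cinf (n + k) \<Longrightarrow> ceq (ext_ideal n) F (\<lambda>z. \<Sum>i<d. fibre_coeff n i F z * shift_fun n (e i) z)"
  using fibre_coeff_expansion by blast

lemma fibre_coeff_diff:
  assumes "F \<in> Cinf (n + k)" "G \<in> Cinf (n + k)" "i < d"
  shows "fibre_coeff n i (\<lambda>z. F z - G z) = (\<lambda>x. fibre_coeff n i F x - fibre_coeff n i G x)"
  unfolding fibre_coeff_def fibre_diff using wcoeff_diff[OF fibre_Cinf fibre_Cinf] assms by simp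

lemma fibre_coeff_add:
  assumes "F \<in> Cinf (n + k)" "G \<in> Cinf (n + k)" "i < d"
  shows "fibre_coeff n i (\<lambda>z. F z + G z) = (\<lambda>x. fibre_coeff n i F x + fibre_coeff n i G x)"
  unfolding fibre_coeff_def fibre_add using wcoeff_add[OF fibre_Cinf fibre_Cinf] assms by simp

lemma tensor_gens_Cinf:
  assumes I: "is_ideal n I"
  shows "{(\<lambda>z. f (\<lambda>i. if i < n then z i else 0)) | f. f \<in> I} \<union> {shift_fun n g | g. g \<in> J} \<subseteq> Cinf (n + k)"
proof -
  have "(\<lambda>z. f (\<lambda>i. if i < n then z i else 0)) \<in> Cinf (n + k)" if "f \<in> I" for f
  proof -
    have fC: "f \<in> Cinf n" using ideal_sub[OF I that] .
    have "(\<lambda>z. f (\<lambda>i. if i < n then z i else 0)) = f" by (rule ext) (rule Cinf_dep[OF fC, symmetric])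
    then show ?thesis using Cinf_mono[OF fC] by simp
  qed
  then show ?thesis using ext_ideal_gens_Cinf by blast
qed

lemma is_ideal_tensor_ideal: "is_ideal n I \<Longrightarrow> is_ideal (n + k) (tensor_ideal n I k J)"
  unfolding tensor_ideal_def by (rule ideal_gen_ideal[OF tensor_gens_Cinf])

lemma ext_ideal_subset_tensor: "is_ideal n I \<Longrightarrow> ext_ideal n \<subseteq> tensor_ideal n I k J"
  unfolding tensor_ideal_def ext_ideal_def by (rule ideal_gen_mono[OF _ tensor_gens_Cinf]) auto

lemma tensor_ideal_base:
  assumes I: "is_ideal n I" and f: "f \<in> I"
  shows "f \<in> tensor_ideal n I k J"
proof -
  have fC: "f \<in> Cinf n" using ideal_sub[OF I f] .
  have "(\<lambda>z. f (\<lambda>i. if i < n then z i else 0)) \<in> tensor_ideal n I k J"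
    unfolding tensor_ideal_def by (rule ideal_gen_base) (use f in blast)
  moreover have "(\<lambda>z. f (\<lambda>i. if i < n then z i else 0)) = f" by (rule ext) (rule Cinf_dep[OF fC, symmetric])
  ultimately show ?thesis by simp
qed

lemma fibre_coeff_mult:
  assumes A: "A \<in> Cinf (n + k)" and G: "G \<in> Cinf (n + k)" and i: "i < d"
  shows "fibre_coeff n i (\<lambda>z. A z * G z) =
    (\<lambda>x. \<Sum>i'<d. fibre_coeff n i (\<lambda>z. A z * shift_fun n (e i') z) x * fibre_coeff n i' G x)"
proof
  fix x
  have prodC: "(\<lambda>y. fibre n x A y * e i' y) \<in> Cinf k" if "i' < d" for i'
    using fibre_Cinf[OF A] e_Cinf[OF that] by (rule Cinf_mult)
  have termC: "(\<lambda>y. fibre_coeff n i' G x * (fibre n x A y * e i' y)) \<in> Cinf k" if "i' < d" for i'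
    using Cinf_mult[OF Cinf_const prodC[OF that]] by simp
  have "ceq J (fibre n x G) (\<lambda>y. \<Sum>i'<d. fibre_coeff n i' G x * e i' y)"
    using wcoeff_spec[OF fibre_Cinf[OF G, of x]] unfolding fibre_coeff_def .
  from ceq_lmult[OF J fibre_Cinf[OF A] this]
  have AG: "ceq J (fibre n x (\<lambda>z. A z * G z))
      (\<lambda>y. \<Sum>i'<d. fibre_coeff n i' G x * (fibre n x A y * e i' y))"
    unfolding fibre_mult by (simp add: sum_distrib_left mult.left_commute)
  have "wcoeff (fibre n x (\<lambda>z. A z * G z)) i =
      wcoeff (\<lambda>y. \<Sum>i'<d. fibre_coeff n i' G x * (fibre n x A y * e i' y)) i"
    by (rule wcoeff_ceq[OF fibre_Cinf[OF Cinf_mult[OF A G]] _ AG i]) (use termC in auto)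
  also have "\<dots> = (\<Sum>i'<d. wcoeff (\<lambda>y. fibre_coeff n i' G x * (fibre n x A y * e i' y)) i)"
    by (rule wcoeff_sum) (use termC i in auto)
  also have "\<dots> = (\<Sum>i'<d. fibre_coeff n i' G x * wcoeff (\<lambda>y. fibre n x A y * e i' y) i)"
    by (rule sum.cong[OF refl]) (use prodC i in \<open>simp add: wcoeff_scale\<close>)
  also have "\<dots> = (\<Sum>i'<d. fibre_coeff n i (\<lambda>z. A z * shift_fun n (e i') z) x * fibre_coeff n i' G x)"
    by (rule sum.cong) (simp_all add: fibre_coeff_def fibre_mult fibre_shift[OF e_Cinf])
  finally show "fibre_coeff n i (\<lambda>z. A z * G z) x =
      (\<Sum>i'<d. fibre_coeff n i (\<lambda>z. A z * shift_fun n (e i') z) x * fibre_coeff n i' G x)"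
    by (simp only: fibre_coeff_def)
qed

lemma is_ideal_fibre_coeff_preimage:
  assumes I: "is_ideal n I"
  shows "is_ideal (n + k) {G \<in> Cinf (n + k). \<forall>i<d. fibre_coeff n i G \<in> I}"
    (is "is_ideal _ ?S")
  unfolding is_ideal_def
proof (intro conjI ballI)
  show "?S \<subseteq> Cinf (n + k)" by blast
  have "fibre_coeff n i (\<lambda>x. 0) = (\<lambda>x. 0)" if "i < d" for i
    unfolding fibre_coeff_def fibre_def using wcoeff_ideal[OF ideal_0[OF J] that] by simp
  then show "(\<lambda>x. 0) \<in> ?S" using ideal_0[OF I] by auto
next
  fix F G assume "F \<in> ?S" "G \<in> ?S"
  then show "(\<lambda>x. F x + G x) \<in> ?S" using fibre_coeff_add ideal_add[OF I] by auto
next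
  fix A G assume A: "A \<in> Cinf (n + k)" and G: "G \<in> ?S"
  then have GC: "G \<in> Cinf (n + k)" by blast
  have "fibre_coeff n i (\<lambda>z. A z * G z) \<in> I" if i: "i < d" for i
    unfolding fibre_coeff_mult[OF A GC i]
  proof (rule ideal_sum[OF I])
    fix i' assume "i' \<in> {..<d}"
    then have i': "i' < d" by simp
    have "(\<lambda>z. A z * shift_fun n (e i') z) \<in> Cinf (n + k)"
      using A shift_fun_Cinf[OF e_Cinf[OF i']] by (rule Cinf_mult)
    then have "fibre_coeff n i (\<lambda>z. A z * shift_fun n (e i') z) \<in> Cinf n"
      using i by (rule fibre_coeff_Cinf)
    with G i' show "(\<lambda>x. fibre_coeff n i (\<lambda>z. A z * shift_fun n (e i') z) x * fibre_coeff n i' G x) \<in> I"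
      by (intro ideal_lmult[OF I]) auto
  qed
  then show "(\<lambda>x. A x * G x) \<in> ?S" using A GC by auto
qed

text \<open>So the fibre coefficients descend to a map \<open>C\<^sup>\<infinity>(\<real>\<^sup>n\<^sup>+\<^sup>k)/(I, J) \<rightarrow> (C\<^sup>\<infinity>(\<real>\<^sup>n)/I)\<^sup>d\<close>,
  inverse to \<open>(C\<^sub>i) \<mapsto> \<Sum>\<^sub>i C\<^sub>i(x) e\<^sub>i(y)\<close>.\<close>
lemma fibre_coeff_tensor_ideal:
  assumes I: "is_ideal n I" and G: "G \<in> tensor_ideal n I k J" and i: "i < d"
  shows "fibre_coeff n i G \<in> I"
proof -
  let ?S = "{G \<in> Cinf (n + k). \<forall>i<d. fibre_coeff n i G \<in> I}"
  have "{(\<lambda>z. f (\<lambda>i. if i < n then z i else 0)) | f. f \<in> I} \<union> {shift_fun n g | g. g \<in> J} \<subseteq> ?S"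
  proof
    fix F assume F: "F \<in> {(\<lambda>z. f (\<lambda>i. if i < n then z i else 0)) | f. f \<in> I} \<union> {shift_fun n g | g. g \<in> J}"
    have FC: "F \<in> Cinf (n + k)" using tensor_gens_Cinf[OF I] F by blast
    show "F \<in> ?S"
    proof (cases "F \<in> {shift_fun n g | g. g \<in> J}")
      case True
      then obtain g where g: "g \<in> J" and Fg: "F = shift_fun n g" by blast
      have "fibre_coeff n i F = (\<lambda>x. 0)" if "i < d" for i
        unfolding fibre_coeff_def Fg fibre_shift[OF ideal_sub[OF J g]] using wcoeff_ideal[OF g that] by simp
      then show ?thesis using FC ideal_0[OF I] by auto
    next
      case False
      then obtain f where f: "f \<in> I" and Ff: "F = (\<lambda>z. f (\<lambda>i. if i < n then z i else 0))" using F by blast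
      have fC: "f \<in> Cinf n" using ideal_sub[OF I f] .
      have Ff': "F = f" unfolding Ff by (rule ext) (rule Cinf_dep[OF fC, symmetric])
      have "fibre_coeff n i F = (\<lambda>x. wcoeff (\<lambda>y. 1) i * f x)" if i: "i < d" for i
      proof
        fix x
        have "fibre n x F = (\<lambda>y. f x * 1)" unfolding Ff' fibre_lift[OF fC] by simp
        then show "fibre_coeff n i F x = wcoeff (\<lambda>y. 1) i * f x"
          unfolding fibre_coeff_def using wcoeff_scale[OF Cinf_const i, of "f x" 1] by simp
      qed
      then show ?thesis using FC ideal_scale[OF I f] by auto
    qed
  qed
  then have "tensor_ideal n I k J \<subseteq> ?S"
    unfolding tensor_ideal_def by (rule ideal_gen_least[OF is_ideal_fibre_coeff_preimage[OF I]])
  then show ?thesis using G i by blast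
qed

section \<open>The Weil restriction\<close>

text \<open>The coordinates of \<open>\<real>\<^sup>m\<^sup>d\<close> are indexed as \<open>x\<^sub>j\<^sub>,\<^sub>i = x\<^sub>j\<^sub>d\<^sub>+\<^sub>i\<close> (\<open>j < m\<close>, \<open>i < d\<close>);
  \<open>weil_comb n b j\<close> is the function \<open>\<Sum>\<^sub>i b\<^sub>j\<^sub>,\<^sub>i(x) e\<^sub>i(y)\<close> on \<open>\<real>\<^sup>n\<^sup>+\<^sup>k\<close>.\<close>
definition weil_comb :: "nat \<Rightarrow> (nat \<Rightarrow> fn) \<Rightarrow> nat \<Rightarrow> fn" where
  "weil_comb n b j = (\<lambda>z. \<Sum>i<d. b (j * d + i) z * shift_fun n (e i) z)"

lemma weil_comb_Cinf:
  assumes b: "\<And>q. q < m * d \<Longrightarrow> b q \<in> Cinf n" and j: "j < m"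
  shows "weil_comb n b j \<in> Cinf (n + k)"
  unfolding weil_comb_def
proof (rule Cinf_sum, rule Cinf_mult)
  fix i assume "i \<in> {..<d}"
  then have i: "i < d" by simp
  show "b (j * d + i) \<in> Cinf (n + k)" using Cinf_mono[OF b[OF index_lt_mult[OF j i]]] by simp
  show "shift_fun n (e i) \<in> Cinf (n + k)" using shift_fun_Cinf[OF e_Cinf[OF i]] .
qed

lemma weil_comb_cong:
  assumes I: "is_ideal n I" and bb: "\<And>q. q < m * d \<Longrightarrow> ceq I (b q) (b' q)" and j: "j < m"
  shows "ceq (tensor_ideal n I k J) (weil_comb n b j) (weil_comb n b' j)"
proof -
  have "(\<lambda>z. \<Sum>i<d. (b (j * d + i) z - b' (j * d + i) z) * shift_fun n (e i) z) \<in> tensor_ideal n I k J"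
  proof (rule ideal_sum[OF is_ideal_tensor_ideal[OF I]])
    fix i assume "i \<in> {..<d}"
    then have i: "i < d" by simp
    have "(\<lambda>z. b (j * d + i) z - b' (j * d + i) z) \<in> tensor_ideal n I k J"
      using tensor_ideal_base[OF I] bb[OF index_lt_mult[OF j i]] unfolding ceq_def by blast
    then show "(\<lambda>z. (b (j * d + i) z - b' (j * d + i) z) * shift_fun n (e i) z) \<in> tensor_ideal n I k J"
      using ideal_rmult[OF is_ideal_tensor_ideal[OF I] shift_fun_Cinf[OF e_Cinf[OF i]]] by blast
  qed
  moreover have "(\<lambda>z. weil_comb n b j z - weil_comb n b' j z) = (\<lambda>z. \<Sum>i<d. (b (j * d + i) z - b' (j * d + i) z) * shift_fun n (e i) z)"
    unfolding weil_comb_def by (simp add: sum_subtractf left_diff_distrib)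
  ultimately show ?thesis unfolding ceq_def by simp
qed

lemma fibre_coeff_weil_comb:
  assumes b: "\<And>q. q < m * d \<Longrightarrow> b q \<in> Cinf n" and j: "j < m" and i: "i < d"
  shows "fibre_coeff n i (weil_comb n b j) = b (j * d + i)"
proof -
  have "\<forall>i<d. b (j * d + i) \<in> Cinf n" using b index_lt_mult[OF j] by blast
  from fibre_coeff_wcomb[OF this i] show ?thesis unfolding weil_comb_def .
qed

definition weil_subst :: "nat \<Rightarrow> nat \<Rightarrow> (nat \<Rightarrow> fn) \<Rightarrow> (nat \<Rightarrow> real) \<Rightarrow> (nat \<Rightarrow> real)" where
  "weil_subst p n b z = (\<lambda>l. if l < p then b l z else if l < p + k then z (n + (l - p)) else 0)"

lemma weil_subst_Cinf:
  assumes b: "\<And>q. q < p \<Longrightarrow> b q \<in> Cinf n" and F: "F \<in> Cinf (p + k)"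
  shows "(\<lambda>z. F (weil_subst p n b z)) \<in> Cinf (n + k)"
proof -
  have "(\<lambda>z. F (weil_subst p n b z)) = cinf_op (p + k) F (\<lambda>l. if l < p then b l else (\<lambda>z. z (n + (l - p))))"
    unfolding cinf_op_def weil_subst_def by (rule ext) (rule arg_cong[where f=F], auto)
  moreover have "cinf_op (p + k) F (\<lambda>l. if l < p then b l else (\<lambda>z. z (n + (l - p)))) \<in> Cinf (n + k)"
  proof (rule Cinf_op[OF F])
    fix l assume "l < p + k"
    show "(if l < p then b l else (\<lambda>z. z (n + (l - p)))) \<in> Cinf (n + k)"
    proof (cases "l < p")
      case True
      then show ?thesis using Cinf_mono[OF b[OF True], of "n + k"] by simp
    next
      case False
      then show ?thesis using \<open>l < p + k\<close> by auto
    qed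
  qed
  ultimately show ?thesis by simp
qed

lemma weil_subst_shift:
  assumes g: "g \<in> Cinf k"
  shows "shift_fun p g (weil_subst p n b z) = shift_fun n g z"
proof -
  have "(\<lambda>j. weil_subst p n b z (p + j)) = (\<lambda>j. if j < k then z (n + j) else 0)" by (auto simp: weil_subst_def)
  then show ?thesis unfolding shift_fun_def using Cinf_dep[OF g, of "\<lambda>j. z (n + j)"] by simp
qed

lemma weil_subst_trunc:
  "(\<lambda>z. f (\<lambda>i. if i < p then weil_subst p n b z i else 0)) = cinf_op p f b"
  unfolding cinf_op_def weil_subst_def by (rule ext) (rule arg_cong[where f=f], auto)

lemma weil_subst_weil_comb:
  assumes b: "\<And>q. q < m * d \<Longrightarrow> b q \<in> Cinf n" and j: "j < m"
  shows "weil_comb (m * d) (\<lambda>q x. x q) j (weil_subst (m * d) n b z) = weil_comb n b j z"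
  unfolding weil_comb_def
proof (rule sum.cong[OF refl])
  fix i assume "i \<in> {..<d}"
  then have i: "i < d" by simp
  show "weil_subst (m * d) n b z (j * d + i) * shift_fun (m * d) (e i) (weil_subst (m * d) n b z) =
        b (j * d + i) z * shift_fun n (e i) z"
    using index_lt_mult[OF j i] weil_subst_shift[OF e_Cinf[OF i]] by (simp add: weil_subst_def)
qed

definition weil_expand :: "nat \<Rightarrow> fn \<Rightarrow> fn" where
  "weil_expand m \<kappa> = cinf_op m \<kappa> (weil_comb (m * d) (\<lambda>q x. x q))"

lemma weil_subst_weil_expand:
  assumes b: "\<And>q. q < m * d \<Longrightarrow> b q \<in> Cinf n"
  shows "(\<lambda>z. weil_expand m \<kappa> (weil_subst (m * d) n b z)) = cinf_op m \<kappa> (weil_comb n b)"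
  unfolding weil_expand_def cinf_op_def
  by (rule ext) (rule arg_cong[where f=\<kappa>], auto simp: weil_subst_weil_comb[OF b])

lemma weil_expand_Cinf:
  assumes "\<kappa> \<in> Cinf m" shows "weil_expand m \<kappa> \<in> Cinf (m * d + k)"
  unfolding weil_expand_def by (rule Cinf_op[OF assms]) (rule weil_comb_Cinf, auto)

lemma fibre_coeff_weil_subst:
  assumes b: "\<And>q. q < p \<Longrightarrow> b q \<in> Cinf n" and F: "F \<in> Cinf (p + k)"
  shows "cinf_op p (fibre_coeff p i F) b = fibre_coeff n i (\<lambda>z. F (weil_subst p n b z))"
proof
  fix x
  have "fibre p (\<lambda>j. if j < p then b j x else 0) F = fibre n x (\<lambda>z. F (weil_subst p n b z))"
  proof
    fix y
    have bx: "b l (\<lambda>l. if l < n then x l else if l < n + k then y (l - n) else 0) = b l x" if "l < p" for l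
    proof -
      have "(\<lambda>i. if i < n then (if i < n then x i else if i < n + k then y (i - n) else 0) else 0) = (\<lambda>i. if i < n then x i else 0)"
        by auto
      then show ?thesis using Cinf_dep[OF b[OF that], of x] Cinf_dep[OF b[OF that], of "\<lambda>l. if l < n then x l else if l < n + k then y (l - n) else 0"]
        by simp
    qed
    show "fibre p (\<lambda>j. if j < p then b j x else 0) F y = fibre n x (\<lambda>z. F (weil_subst p n b z)) y"
      unfolding fibre_def weil_subst_def by (rule arg_cong[where f=F], rule ext) (auto simp: bx)
  qed
  then show "cinf_op p (fibre_coeff p i F) b x = fibre_coeff n i (\<lambda>z. F (weil_subst p n b z)) x"
    unfolding cinf_op_def fibre_coeff_def by simp
qed

text \<open>The Weil restriction \<open>Y\<^sup>D\<close> of \<open>Y = Spec C\<^sup>\<infinity>(\<real>\<^sup>m)/K\<close>: a point of \<open>\<real>\<^sup>m\<^sup>d\<close> is a family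
  \<open>x\<^sub>j\<^sub>,\<^sub>i\<close> encoding the \<open>W\<close>-points \<open>\<Sum>\<^sub>i x\<^sub>j\<^sub>,\<^sub>i e\<^sub>i\<close>, \<open>j < m\<close>; the ideal is generated by the
  basis coefficients of \<open>\<kappa>(\<Sum>\<^sub>i x\<^sub>j\<^sub>,\<^sub>i e\<^sub>i)\<close>, \<open>\<kappa> \<in> K\<close>.\<close>
definition weil_ideal :: "nat \<Rightarrow> fn set \<Rightarrow> fn set" where
  "weil_ideal m K = ideal_gen (m * d) {fibre_coeff (m * d) i (weil_expand m \<kappa>) | \<kappa> i. \<kappa> \<in> K \<and> i < d}"

definition to_tensor :: "nat \<Rightarrow> nat \<Rightarrow> (fn \<Rightarrow> fn) \<Rightarrow> fn \<Rightarrow> fn" where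
  "to_tensor m n h = (\<lambda>f. cinf_op m f (weil_comb n (\<lambda>q. h (\<lambda>x. x q))))"

definition tensor_coeffs :: "nat \<Rightarrow> (fn \<Rightarrow> fn) \<Rightarrow> nat \<Rightarrow> fn" where
  "tensor_coeffs n g q = fibre_coeff n (q mod d) (g (\<lambda>x. x (q div d)))"

definition from_tensor :: "nat \<Rightarrow> nat \<Rightarrow> (fn \<Rightarrow> fn) \<Rightarrow> fn \<Rightarrow> fn" where
  "from_tensor m n g = (\<lambda>F. cinf_op (m * d) F (tensor_coeffs n g))"

lemma weil_ideal_gens_Cinf:
  assumes K: "is_ideal m K"
  shows "{fibre_coeff (m * d) i (weil_expand m \<kappa>) | \<kappa> i. \<kappa> \<in> K \<and> i < d} \<subseteq> Cinf (m * d)"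
  using fibre_coeff_Cinf[OF weil_expand_Cinf[OF ideal_sub[OF K]]] by blast

lemma is_ideal_weil_ideal: "is_ideal m K \<Longrightarrow> is_ideal (m * d) (weil_ideal m K)"
  unfolding weil_ideal_def by (rule ideal_gen_ideal[OF weil_ideal_gens_Cinf])

lemma weil_expand_tensor_ideal:
  assumes K: "is_ideal m K" and \<kappa>: "\<kappa> \<in> K"
  shows "weil_expand m \<kappa> \<in> tensor_ideal (m * d) (weil_ideal m K) k J"
proof -
  let ?p = "m * d" and ?T = "tensor_ideal (m * d) (weil_ideal m K) k J"
  have L: "is_ideal ?p (weil_ideal m K)" by (rule is_ideal_weil_ideal[OF K])
  have T: "is_ideal (?p + k) ?T" by (rule is_ideal_tensor_ideal[OF L])
  have XC: "weil_expand m \<kappa> \<in> Cinf (?p + k)" by (rule weil_expand_Cinf[OF ideal_sub[OF K \<kappa>]])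
  have "(\<lambda>z. \<Sum>i<d. fibre_coeff ?p i (weil_expand m \<kappa>) z * shift_fun ?p (e i) z) \<in> ?T"
  proof (rule ideal_sum[OF T])
    fix i assume "i \<in> {..<d}"
    then have i: "i < d" by simp
    have "fibre_coeff ?p i (weil_expand m \<kappa>) \<in> weil_ideal m K"
      unfolding weil_ideal_def by (rule ideal_gen_base) (use \<kappa> i in auto)
    then have "fibre_coeff ?p i (weil_expand m \<kappa>) \<in> ?T" by (rule tensor_ideal_base[OF L])
    then show "(\<lambda>z. fibre_coeff ?p i (weil_expand m \<kappa>) z * shift_fun ?p (e i) z) \<in> ?T"
      by (rule ideal_rmult[OF T shift_fun_Cinf[OF e_Cinf[OF i]]])
  qed
  with ceq_mono[OF fibre_coeff_ceq[OF XC] ext_ideal_subset_tensor[OF L]] show ?thesis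
    by (rule ceq_mem[OF T])
qed

lemma weil_subst_tensor_ideal:
  assumes K: "is_ideal m K" and I: "is_ideal n I"
    and b: "\<And>q. q < m * d \<Longrightarrow> b q \<in> Cinf n"
    and bL: "\<And>f. f \<in> weil_ideal m K \<Longrightarrow> cinf_op (m * d) f b \<in> I"
    and F: "F \<in> tensor_ideal (m * d) (weil_ideal m K) k J"
  shows "(\<lambda>z. F (weil_subst (m * d) n b z)) \<in> tensor_ideal n I k J"
proof -
  have sm: "(\<lambda>z. G (weil_subst (m * d) n b z)) \<in> Cinf (n + k)" if "G \<in> Cinf (m * d + k)" for G
    by (rule weil_subst_Cinf[OF b that])
  have gens: "(\<lambda>z. G (weil_subst (m * d) n b z)) \<in> tensor_ideal n I k J"
    if G: "G \<in> {(\<lambda>z. f (\<lambda>i. if i < m * d then z i else 0)) | f. f \<in> weil_ideal m K} \<union>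
        {shift_fun (m * d) g | g. g \<in> J}" for G
  proof (cases "G \<in> {shift_fun (m * d) g | g. g \<in> J}")
    case True
    then obtain g where g: "g \<in> J" and Gg: "G = shift_fun (m * d) g" by blast
    have "(\<lambda>z. G (weil_subst (m * d) n b z)) = shift_fun n g"
      unfolding Gg by (rule ext) (rule weil_subst_shift[OF ideal_sub[OF J g]])
    moreover have "shift_fun n g \<in> tensor_ideal n I k J"
      using ext_ideal_subset_tensor[OF I] ext_ideal_gen[OF g] by blast
    ultimately show ?thesis by simp
  next
    case False
    then obtain f where f: "f \<in> weil_ideal m K" and Gf: "G = (\<lambda>z. f (\<lambda>i. if i < m * d then z i else 0))"
      using G by blast
    have "(\<lambda>z. G (weil_subst (m * d) n b z)) = cinf_op (m * d) f b" unfolding Gf by (rule weil_subst_trunc)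
    then show ?thesis using tensor_ideal_base[OF I bL[OF f]] by simp
  qed
  show ?thesis
    by (rule subst_ideal[OF is_ideal_tensor_ideal[OF I] sm gens F[unfolded tensor_ideal_def]
          tensor_gens_Cinf[OF is_ideal_weil_ideal[OF K]]])
qed

lemma to_tensor_mem:
  assumes K: "is_ideal m K" and I: "is_ideal n I"
    and h: "alg_hom (m * d) (weil_ideal m K) n I h" and \<kappa>: "\<kappa> \<in> K"
  shows "to_tensor m n h \<kappa> \<in> tensor_ideal n I k J"
proof -
  let ?b = "\<lambda>q. h (\<lambda>x. x q)"
  have b: "?b q \<in> Cinf n" if "q < m * d" for q using alg_hom_Cinf[OF h Cinf_coord[OF that]] .
  have bL: "cinf_op (m * d) f ?b \<in> I" if f: "f \<in> weil_ideal m K" for f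
  proof -
    have "h f \<in> I" by (rule alg_hom_mem[OF is_ideal_weil_ideal[OF K] I h f])
    with alg_hom_coords[OF h ideal_sub[OF is_ideal_weil_ideal[OF K] f]] show ?thesis
      by (rule ceq_mem[OF I ceq_sym[OF I]])
  qed
  have "(\<lambda>z. weil_expand m \<kappa> (weil_subst (m * d) n ?b z)) \<in> tensor_ideal n I k J"
    by (rule weil_subst_tensor_ideal[OF K I b bL weil_expand_tensor_ideal[OF K \<kappa>]])
  then show ?thesis by (simp add: to_tensor_def weil_subst_weil_expand[OF b])
qed

lemma alg_hom_to_tensor:
  assumes K: "is_ideal m K" and I: "is_ideal n I" and h: "alg_hom (m * d) (weil_ideal m K) n I h"
  shows "alg_hom m K (n + k) (tensor_ideal n I k J) (to_tensor m n h)"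
  unfolding alg_hom_def
proof (intro conjI ballI allI impI)
  fix f assume f: "f \<in> Cinf m"
  show "to_tensor m n h f \<in> Cinf (n + k)" unfolding to_tensor_def
    by (rule Cinf_op[OF f]) (rule weil_comb_Cinf[OF alg_hom_Cinf[OF h Cinf_coord]])
next
  fix f g assume "ceq K f g"
  then have "to_tensor m n h (\<lambda>x. f x - g x) \<in> tensor_ideal n I k J"
    unfolding ceq_def by (rule to_tensor_mem[OF K I h])
  then show "ceq (tensor_ideal n I k J) (to_tensor m n h f) (to_tensor m n h g)"
    by (simp add: ceq_def to_tensor_def cinf_op_def)
next
  fix k' G fs
  show "ceq (tensor_ideal n I k J) (to_tensor m n h (cinf_op k' G fs)) (cinf_op k' G (\<lambda>j. to_tensor m n h (fs j)))"
    by (rule ceq_eq[OF is_ideal_tensor_ideal[OF I]]) (simp add: to_tensor_def cinf_op_def)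
qed

lemma tensor_coeffs_Cinf:
  assumes g: "alg_hom m K (n + k) T g" and q: "q < m * d"
  shows "tensor_coeffs n g q \<in> Cinf n"
  unfolding tensor_coeffs_def
  by (rule fibre_coeff_Cinf[OF alg_hom_Cinf[OF g Cinf_coord[OF index_div_lt[OF q]]] index_mod_lt[OF q]])

lemma alg_hom_tensor_expansion:
  assumes I: "is_ideal n I" and g: "alg_hom m K (n + k) (tensor_ideal n I k J) g" and f: "f \<in> Cinf m"
  shows "ceq (tensor_ideal n I k J) (g f) (cinf_op m f (weil_comb n (tensor_coeffs n g)))"
proof -
  let ?T = "tensor_ideal n I k J"
  have T: "is_ideal (n + k) ?T" by (rule is_ideal_tensor_ideal[OF I])
  have "ceq ?T (g (\<lambda>x. x j)) (weil_comb n (tensor_coeffs n g) j)" if j: "j < m" for j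
  proof -
    have "weil_comb n (tensor_coeffs n g) j =
        (\<lambda>z. \<Sum>i<d. fibre_coeff n i (g (\<lambda>x. x j)) z * shift_fun n (e i) z)"
      unfolding weil_comb_def tensor_coeffs_def by (intro ext sum.cong) simp_all
    with ceq_mono[OF fibre_coeff_ceq[OF alg_hom_Cinf[OF g Cinf_coord[OF j]]] ext_ideal_subset_tensor[OF I]]
    show ?thesis by simp
  qed
  from ceq_cinf_op[OF T f alg_hom_Cinf[OF g Cinf_coord] weil_comb_Cinf[OF tensor_coeffs_Cinf[OF g]] this]
  show ?thesis by (rule ceq_trans[OF T alg_hom_coords[OF g f]])
qed

lemma from_tensor_mem:
  assumes K: "is_ideal m K" and I: "is_ideal n I" and g: "alg_hom m K (n + k) (tensor_ideal n I k J) g"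
    and F: "F \<in> weil_ideal m K"
  shows "from_tensor m n g F \<in> I"
proof -
  let ?p = "m * d" and ?T = "tensor_ideal n I k J"
  have T: "is_ideal (n + k) ?T" by (rule is_ideal_tensor_ideal[OF I])
  have b: "tensor_coeffs n g q \<in> Cinf n" if "q < ?p" for q by (rule tensor_coeffs_Cinf[OF g that])
  have opeq: "(\<lambda>x. G (\<lambda>j. if j < ?p then tensor_coeffs n g j x else 0)) = cinf_op ?p G (tensor_coeffs n g)"
    for G unfolding cinf_op_def ..
  have "(\<lambda>x. F (\<lambda>j. if j < ?p then tensor_coeffs n g j x else 0)) \<in> I"
  proof (rule subst_ideal[OF I _ _ F[unfolded weil_ideal_def] weil_ideal_gens_Cinf[OF K]])
    fix G assume "G \<in> Cinf ?p"
    then show "(\<lambda>x. G (\<lambda>j. if j < ?p then tensor_coeffs n g j x else 0)) \<in> Cinf n"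
      unfolding opeq by (rule Cinf_op) (rule b)
  next
    fix G assume "G \<in> {fibre_coeff ?p i (weil_expand m \<kappa>) | \<kappa> i. \<kappa> \<in> K \<and> i < d}"
    then obtain \<kappa> i where \<kappa>: "\<kappa> \<in> K" and i: "i < d" and G: "G = fibre_coeff ?p i (weil_expand m \<kappa>)"
      by blast
    have \<kappa>C: "\<kappa> \<in> Cinf m" using ideal_sub[OF K \<kappa>] .
    have "cinf_op ?p G (tensor_coeffs n g) = fibre_coeff n i (cinf_op m \<kappa> (weil_comb n (tensor_coeffs n g)))"
      using fibre_coeff_weil_subst[OF b weil_expand_Cinf[OF \<kappa>C], where i=i] weil_subst_weil_expand[OF b]
      by (simp add: G)
    moreover have "cinf_op m \<kappa> (weil_comb n (tensor_coeffs n g)) \<in> ?T"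
      using alg_hom_tensor_expansion[OF I g \<kappa>C] alg_hom_mem[OF K T g \<kappa>]
      by (rule ceq_mem[OF T ceq_sym[OF T]])
    ultimately show "(\<lambda>x. G (\<lambda>j. if j < ?p then tensor_coeffs n g j x else 0)) \<in> I"
      unfolding opeq using fibre_coeff_tensor_ideal[OF I _ i] by simp
  qed
  then show ?thesis unfolding from_tensor_def opeq .
qed

lemma alg_hom_from_tensor:
  assumes K: "is_ideal m K" and I: "is_ideal n I" and g: "alg_hom m K (n + k) (tensor_ideal n I k J) g"
  shows "alg_hom (m * d) (weil_ideal m K) n I (from_tensor m n g)"
  unfolding alg_hom_def
proof (intro conjI ballI allI impI)
  fix F assume F: "F \<in> Cinf (m * d)"
  show "from_tensor m n g F \<in> Cinf n"
    unfolding from_tensor_def by (rule Cinf_op[OF F]) (rule tensor_coeffs_Cinf[OF g])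
next
  fix F G assume "ceq (weil_ideal m K) F G"
  then have "from_tensor m n g (\<lambda>x. F x - G x) \<in> I"
    unfolding ceq_def by (rule from_tensor_mem[OF K I g])
  then show "ceq I (from_tensor m n g F) (from_tensor m n g G)"
    by (simp add: ceq_def from_tensor_def cinf_op_def)
next
  fix k' G fs
  show "ceq I (from_tensor m n g (cinf_op k' G fs)) (cinf_op k' G (\<lambda>j. from_tensor m n g (fs j)))"
    by (rule ceq_eq[OF I]) (simp add: from_tensor_def cinf_op_def)
qed

lemma hom_equiv_to_tensor:
  assumes I: "is_ideal n I"
    and h1: "alg_hom (m * d) L n I h1" and h2: "alg_hom (m * d) L n I h2"
    and h12: "hom_equiv (m * d) I h1 h2"
  shows "hom_equiv m (tensor_ideal n I k J) (to_tensor m n h1) (to_tensor m n h2)"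
  unfolding hom_equiv_def
proof
  fix f assume f: "f \<in> Cinf m"
  show "ceq (tensor_ideal n I k J) (to_tensor m n h1 f) (to_tensor m n h2 f)"
    unfolding to_tensor_def
  proof (rule ceq_cinf_op[OF is_ideal_tensor_ideal[OF I] f])
    fix j assume j: "j < m"
    show "weil_comb n (\<lambda>q. h1 (\<lambda>x. x q)) j \<in> Cinf (n + k)"
      by (rule weil_comb_Cinf[OF alg_hom_Cinf[OF h1 Cinf_coord] j])
    show "weil_comb n (\<lambda>q. h2 (\<lambda>x. x q)) j \<in> Cinf (n + k)"
      by (rule weil_comb_Cinf[OF alg_hom_Cinf[OF h2 Cinf_coord] j])
    have "ceq I (h1 (\<lambda>x. x q)) (h2 (\<lambda>x. x q))" if "q < m * d" for q
      using h12 Cinf_coord[OF that] unfolding hom_equiv_def by blast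
    then show "ceq (tensor_ideal n I k J) (weil_comb n (\<lambda>q. h1 (\<lambda>x. x q)) j) (weil_comb n (\<lambda>q. h2 (\<lambda>x. x q)) j)"
      by (rule weil_comb_cong[OF I _ j])
  qed
qed

lemma hom_equiv_from_tensor:
  assumes I: "is_ideal n I"
    and g1: "alg_hom m K (n + k) (tensor_ideal n I k J) g1" and g2: "alg_hom m K (n + k) (tensor_ideal n I k J) g2"
    and g12: "hom_equiv m (tensor_ideal n I k J) g1 g2"
  shows "hom_equiv (m * d) I (from_tensor m n g1) (from_tensor m n g2)"
  unfolding hom_equiv_def
proof
  fix F assume F: "F \<in> Cinf (m * d)"
  show "ceq I (from_tensor m n g1 F) (from_tensor m n g2 F)"
    unfolding from_tensor_def
  proof (rule ceq_cinf_op[OF I F])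
    fix q assume q: "q < m * d"
    show "tensor_coeffs n g1 q \<in> Cinf n" by (rule tensor_coeffs_Cinf[OF g1 q])
    show "tensor_coeffs n g2 q \<in> Cinf n" by (rule tensor_coeffs_Cinf[OF g2 q])
    note qd = index_div_lt[OF q] and qm = index_mod_lt[OF q]
    have "ceq (tensor_ideal n I k J) (g1 (\<lambda>x. x (q div d))) (g2 (\<lambda>x. x (q div d)))"
      using g12 Cinf_coord[OF qd] unfolding hom_equiv_def by blast
    then have "fibre_coeff n (q mod d) (\<lambda>z. g1 (\<lambda>x. x (q div d)) z - g2 (\<lambda>x. x (q div d)) z) \<in> I"
      unfolding ceq_def by (rule fibre_coeff_tensor_ideal[OF I _ qm])
    then show "ceq I (tensor_coeffs n g1 q) (tensor_coeffs n g2 q)"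
      unfolding ceq_def tensor_coeffs_def
        fibre_coeff_diff[OF alg_hom_Cinf[OF g1 Cinf_coord[OF qd]] alg_hom_Cinf[OF g2 Cinf_coord[OF qd]] qm] .
  qed
qed

lemma from_to_tensor:
  assumes I: "is_ideal n I" and h: "alg_hom (m * d) L n I h"
  shows "hom_equiv (m * d) I (from_tensor m n (to_tensor m n h)) h"
  unfolding hom_equiv_def
proof
  fix F assume F: "F \<in> Cinf (m * d)"
  let ?b = "\<lambda>q. h (\<lambda>x. x q)"
  have b: "?b q \<in> Cinf n" if "q < m * d" for q using alg_hom_Cinf[OF h Cinf_coord[OF that]] .
  have "tensor_coeffs n (to_tensor m n h) q = ?b q" if q: "q < m * d" for q
  proof -
    have "to_tensor m n h (\<lambda>x. x (q div d)) = weil_comb n ?b (q div d)"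
      unfolding to_tensor_def cinf_op_def using index_div_lt[OF q] by simp
    then have "tensor_coeffs n (to_tensor m n h) q = ?b (q div d * d + q mod d)"
      unfolding tensor_coeffs_def using fibre_coeff_weil_comb[OF b index_div_lt[OF q] index_mod_lt[OF q]]
      by simp
    then show ?thesis by simp
  qed
  then have "from_tensor m n (to_tensor m n h) F = cinf_op (m * d) F ?b"
    unfolding from_tensor_def cinf_op_def by (intro ext arg_cong[where f=F]) auto
  with ceq_sym[OF I alg_hom_coords[OF h F]] show "ceq I (from_tensor m n (to_tensor m n h) F) (h F)"
    by simp
qed

lemma to_from_tensor:
  assumes I: "is_ideal n I" and g: "alg_hom m K (n + k) (tensor_ideal n I k J) g"
  shows "hom_equiv m (tensor_ideal n I k J) (to_tensor m n (from_tensor m n g)) g"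
  unfolding hom_equiv_def
proof
  fix f assume f: "f \<in> Cinf m"
  have "weil_comb n (\<lambda>q. from_tensor m n g (\<lambda>x. x q)) j = weil_comb n (tensor_coeffs n g) j"
    if j: "j < m" for j
    unfolding weil_comb_def from_tensor_def cinf_op_def
    by (intro ext sum.cong) (simp_all add: index_lt_mult[OF j])
  then have "to_tensor m n (from_tensor m n g) f = cinf_op m f (weil_comb n (tensor_coeffs n g))"
    unfolding to_tensor_def cinf_op_def by (intro ext arg_cong[where f=f]) auto
  with alg_hom_tensor_expansion[OF I g f]
  show "ceq (tensor_ideal n I k J) (to_tensor m n (from_tensor m n g) f) (g f)"
    by (simp add: ceq_sym[OF is_ideal_tensor_ideal[OF I]])
qed

lemma tensor_map_to_tensor:
  assumes b: "\<And>q. q < m * d \<Longrightarrow> h (\<lambda>x. x q) \<in> Cinf n"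
  shows "tensor_map n n' k u (to_tensor m n h f) =
    cinf_op m f (weil_comb n' (\<lambda>q. cinf_op n (h (\<lambda>x. x q)) (\<lambda>i. u (\<lambda>x. x i))))"
proof
  fix z
  define \<tau> where "\<tau> = (\<lambda>i. if i < n then u (\<lambda>x. x i) z else if i < n + k then z (n' + (i - n)) else 0)"
  have "h (\<lambda>x. x q) \<tau> = cinf_op n (h (\<lambda>x. x q)) (\<lambda>i. u (\<lambda>x. x i)) z" if "q < m * d" for q
  proof -
    have "h (\<lambda>x. x q) \<tau> = h (\<lambda>x. x q) (\<lambda>i. if i < n then \<tau> i else 0)" by (rule Cinf_dep[OF b[OF that]])
    also have "(\<lambda>i. if i < n then \<tau> i else 0) = (\<lambda>i. if i < n then u (\<lambda>x. x i) z else 0)"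
      unfolding \<tau>_def by auto
    finally show ?thesis unfolding cinf_op_def by simp
  qed
  moreover have "shift_fun n (e i) \<tau> = shift_fun n' (e i) z" if "i < d" for i
  proof -
    have "(\<lambda>l. \<tau> (n + l)) = (\<lambda>l. if l < k then z (n' + l) else 0)" unfolding \<tau>_def by auto
    then show ?thesis unfolding shift_fun_def using Cinf_dep[OF e_Cinf[OF that], of "\<lambda>l. z (n' + l)"] by simp
  qed
  ultimately have "weil_comb n (\<lambda>q. h (\<lambda>x. x q)) j \<tau> =
      weil_comb n' (\<lambda>q. cinf_op n (h (\<lambda>x. x q)) (\<lambda>i. u (\<lambda>x. x i))) j z" if j: "j < m" for j
    unfolding weil_comb_def by (intro sum.cong) (simp_all add: index_lt_mult[OF j])
  then show "tensor_map n n' k u (to_tensor m n h f) z =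
      cinf_op m f (weil_comb n' (\<lambda>q. cinf_op n (h (\<lambda>x. x q)) (\<lambda>i. u (\<lambda>x. x i)))) z"
    unfolding tensor_map_def to_tensor_def cinf_op_def \<tau>_def[symmetric]
    by (intro arg_cong[where f=f]) auto
qed

lemma to_tensor_natural:
  assumes I': "is_ideal n' I'" and u: "alg_hom n I n' I' u" and h: "alg_hom (m * d) (weil_ideal m K) n I h"
  shows "hom_equiv m (tensor_ideal n' I' k J) (to_tensor m n' (u \<circ> h)) (tensor_map n n' k u \<circ> to_tensor m n h)"
  unfolding hom_equiv_def
proof
  fix f assume f: "f \<in> Cinf m"
  let ?T = "tensor_ideal n' I' k J"
  let ?b = "\<lambda>q. h (\<lambda>x. x q)"
  let ?b1 = "\<lambda>q. u (?b q)"
  let ?b2 = "\<lambda>q. cinf_op n (?b q) (\<lambda>i. u (\<lambda>x. x i))"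
  have b: "?b q \<in> Cinf n" if "q < m * d" for q using alg_hom_Cinf[OF h Cinf_coord[OF that]] .
  have "ceq ?T (cinf_op m f (weil_comb n' ?b1)) (cinf_op m f (weil_comb n' ?b2))"
  proof (rule ceq_cinf_op[OF is_ideal_tensor_ideal[OF I'] f])
    fix j assume j: "j < m"
    show "weil_comb n' ?b1 j \<in> Cinf (n' + k)"
      by (rule weil_comb_Cinf[OF alg_hom_Cinf[OF u b] j])
    show "weil_comb n' ?b2 j \<in> Cinf (n' + k)"
      by (rule weil_comb_Cinf[OF Cinf_op[OF b alg_hom_Cinf[OF u Cinf_coord]] j])
    show "ceq ?T (weil_comb n' ?b1 j) (weil_comb n' ?b2 j)"
      by (rule weil_comb_cong[OF I' alg_hom_coords[OF u b] j])
  qed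
  moreover have "to_tensor m n' (u \<circ> h) f = cinf_op m f (weil_comb n' ?b1)"
    by (simp add: to_tensor_def)
  ultimately show "ceq ?T (to_tensor m n' (u \<circ> h) f) ((tensor_map n n' k u \<circ> to_tensor m n h) f)"
    by (simp add: tensor_map_to_tensor[where h=h, OF b])
qed

end

theorem lemma2p26:
  fixes k m :: nat and J K :: "fn set"
  assumes W: "local_artinian k J"
    and Y: "is_ideal m K"
  shows "\<exists>p L (\<Phi> :: nat \<Rightarrow> fn set \<Rightarrow> (fn \<Rightarrow> fn) \<Rightarrow> (fn \<Rightarrow> fn))
                (\<Psi> :: nat \<Rightarrow> fn set \<Rightarrow> (fn \<Rightarrow> fn) \<Rightarrow> (fn \<Rightarrow> fn)).
     is_ideal p L \<and>
     (\<forall>n I. is_ideal n I \<longrightarrow>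
        (\<forall>h. alg_hom p L n I h \<longrightarrow> alg_hom m K (n + k) (tensor_ideal n I k J) (\<Phi> n I h)) \<and>
        (\<forall>g. alg_hom m K (n + k) (tensor_ideal n I k J) g \<longrightarrow> alg_hom p L n I (\<Psi> n I g)) \<and>
        (\<forall>h1 h2. alg_hom p L n I h1 \<longrightarrow> alg_hom p L n I h2 \<longrightarrow> hom_equiv p I h1 h2 \<longrightarrow>
            hom_equiv m (tensor_ideal n I k J) (\<Phi> n I h1) (\<Phi> n I h2)) \<and>
        (\<forall>g1 g2. alg_hom m K (n + k) (tensor_ideal n I k J) g1 \<longrightarrow>
            alg_hom m K (n + k) (tensor_ideal n I k J) g2 \<longrightarrow>
            hom_equiv m (tensor_ideal n I k J) g1 g2 \<longrightarrow>
            hom_equiv p I (\<Psi> n I g1) (\<Psi> n I g2)) \<and>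
        (\<forall>h. alg_hom p L n I h \<longrightarrow> hom_equiv p I (\<Psi> n I (\<Phi> n I h)) h) \<and>
        (\<forall>g. alg_hom m K (n + k) (tensor_ideal n I k J) g \<longrightarrow>
            hom_equiv m (tensor_ideal n I k J) (\<Phi> n I (\<Psi> n I g)) g)) \<and>
     (\<forall>n I n' I' u h. is_ideal n I \<longrightarrow> is_ideal n' I' \<longrightarrow> alg_hom n I n' I' u \<longrightarrow>
        alg_hom p L n I h \<longrightarrow>
        hom_equiv m (tensor_ideal n' I' k J) (\<Phi> n' I' (u \<circ> h))
                                            (tensor_map n n' k u \<circ> \<Phi> n I h))"
proof -
  obtain d :: nat and e M N a where "weil_presentation k J d e M N a"
    by (rule weil_presentation_exists[OF W])
  then interpret weil_presentation k J d e M N a .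
  show ?thesis
  proof (rule exI[of _ "m * d"], rule exI[of _ "weil_ideal m K"], rule exI[of _ "\<lambda>n I. to_tensor m n"],
      rule exI[of _ "\<lambda>n I. from_tensor m n"], intro conjI allI impI)
    show "is_ideal (m * d) (weil_ideal m K)" by (rule is_ideal_weil_ideal[OF Y])
  qed (simp_all add: alg_hom_to_tensor[OF Y] alg_hom_from_tensor[OF Y] hom_equiv_to_tensor
      hom_equiv_from_tensor from_to_tensor to_from_tensor to_tensor_natural)
qed

end
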